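(* Consider the online algorithm selection procedure that maximizes $\mathrm{OneMax}$ on $\{0,1\}^n$ by starting from a uniformly random search point, running the $(1+\lambda)$ EA with population size $\lambda_1$ until it holds an individual at distance at most $D$ from the optimum $1^n$, and then switching to the $(1+(\lambda,\lambda))$ GA with population size $\lambda_2$ (initialized with that individual) until the optimum is found. Assume that, as functions of $n$: (a) $\lambda_1=O\left(\frac{\log\log n\,\log\log\log n}{\log\log\log\log n}\right)$; (b) $D\ge n/(\log n)^c$ for some constant $c>0$ and $D=O\left(\frac{n(\log\log n)^2}{\log n}\right)$; (c) $\lambda_2=\Omega\left(\frac{\log n}{\log\log n}\right)$ and $\lambda_2=O\left(\frac{n}{D}\log\log n\right)$. Then the expected number of fitness evaluations until the optimum is found is $O(n\log\log n)$.
   Context: $\mathrm{OneMax}(x)=\sum_{i=1}^n x_i$, optimum $1^n$; distance = number of zero-bits. The $(1+\lambda)$ EA keeps one individual $x$; each iteration creates $\lambda$ offspring independently by flipping each bit of $x$ independently with probability $1/n$, picks a best offspring $y$ (ties arbitrary), and sets $x\gets y$ if $f(y)\ge f(x)$; cost $\lambda$ evaluations per iteration. The $(1+(\lambda,\lambda))$ GA with parameter $\lambda\in[1..n]$ keeps one individual $x$; each iteration: sample $\ell\sim\mathrm{Bin}(n,\lambda/n)$, create $\lambda$ offspring each flipping exactly $\ell$ uniformly random distinct positions of $x$, let $x'$ be a best one (ties uniformly at random); then create $\lambda$ offspring each taking independently per position the bit of $x'$ with probability $1/\lambda$ and of $x$ otherwise; let $y$ be a best one; set $x\gets y$ if $f(y)\ge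 f(x)$. Cost $2\lambda$ evaluations per iteration. *)

theory Defs
  imports "HOL-Probability.Probability" "HOL-Library.Landau_Symbols"
begin

definition onemax :: "bool list \<Rightarrow> nat" where
  "onemax x = length (filter id x)"

fun bitwise_mut :: "real \<Rightarrow> bool list \<Rightarrow> bool list pmf" where
  "bitwise_mut p [] = return_pmf []"
| "bitwise_mut p (b # bs) =
     bind_pmf (bernoulli_pmf p) (\<lambda>c. bind_pmf (bitwise_mut p bs)
       (\<lambda>cs. return_pmf ((if c then \<not> b else b) # cs)))"

fun sample_list :: "nat \<Rightarrow> 'a pmf \<Rightarrow> 'a list pmf" where
  "sample_list 0 M = return_pmf []"
| "sample_list (Suc k) M =
     bind_pmf M (\<lambda>y. bind_pmf (sample_list k M) (\<lambda>ys. return_pmf (y # ys)))"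

definition best_idx :: "bool list list \<Rightarrow> nat set" where
  "best_idx ys = {i. i < length ys \<and> (\<forall>j<length ys. onemax (ys ! j) \<le> onemax (ys ! i))}"

text \<open>Fixed (arbitrary) tie-breaking: first best offspring.\<close>
definition best_first :: "bool list list \<Rightarrow> bool list" where
  "best_first ys = ys ! (LEAST i. i \<in> best_idx ys)"

definition best_uniform :: "bool list list \<Rightarrow> bool list pmf" where
  "best_uniform ys = map_pmf (\<lambda>i. ys ! i) (pmf_of_set (best_idx ys))"

definition ea_step :: "nat \<Rightarrow> nat \<Rightarrow> bool list \<Rightarrow> bool list pmf" where
  "ea_step n lam x =
     bind_pmf (sample_list lam (bitwise_mut (1 / real n) x))
       (\<lambda>ys. let y = best_first ys in return_pmf (if onemax x \<le> onemax y then y else x))"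

definition flip_set :: "nat set \<Rightarrow> bool list \<Rightarrow> bool list" where
  "flip_set S x = map (\<lambda>i. if i \<in> S then \<not> x ! i else x ! i) [0..<length x]"

definition mut_ell :: "nat \<Rightarrow> bool list \<Rightarrow> bool list pmf" where
  "mut_ell l x = map_pmf (\<lambda>S. flip_set S x)
     (pmf_of_set {S. S \<subseteq> {..<length x} \<and> card S = l})"

fun crossover :: "real \<Rightarrow> bool list \<Rightarrow> bool list \<Rightarrow> bool list pmf" where
  "crossover p [] ys = return_pmf []"
| "crossover p (a # as) [] = return_pmf []"
| "crossover p (a # as) (b # bs) =
     bind_pmf (bernoulli_pmf p) (\<lambda>c. bind_pmf (crossover p as bs)
       (\<lambda>cs. return_pmf ((if c then b else a) # cs)))"

definition ga_step :: "nat \<Rightarrow> nat \<Rightarrow> bool list \<Rightarrow> bool list pmf" where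
  "ga_step n lam x =
     bind_pmf (binomial_pmf n (real lam / real n)) (\<lambda>l.
     bind_pmf (sample_list lam (mut_ell l x)) (\<lambda>ys.
     bind_pmf (best_uniform ys) (\<lambda>x'.
     bind_pmf (sample_list lam (crossover (1 / real lam) x x')) (\<lambda>zs.
       let y = best_first zs in return_pmf (if onemax x \<le> onemax y then y else x)))))"

text \<open>State: (switched to GA?, current individual).\<close>
definition combined_step ::
  "nat \<Rightarrow> nat \<Rightarrow> nat \<Rightarrow> nat \<Rightarrow> bool \<times> bool list \<Rightarrow> (bool \<times> bool list) pmf" where
  "combined_step n lam1 D lam2 s =
     (if fst s then map_pmf (\<lambda>y. (True, y)) (ga_step n lam2 (snd s))
      else map_pmf (\<lambda>y. (n - onemax y \<le> D, y)) (ea_step n lam1 (snd s)))"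

definition init_state :: "nat \<Rightarrow> nat \<Rightarrow> (bool \<times> bool list) pmf" where
  "init_state n D = map_pmf (\<lambda>x. (n - onemax x \<le> D, x)) (pmf_of_set {x. length x = n})"

definition state_after :: "nat \<Rightarrow> nat \<Rightarrow> nat \<Rightarrow> nat \<Rightarrow> nat \<Rightarrow> (bool \<times> bool list) pmf" where
  "state_after n lam1 D lam2 t =
     ((\<lambda>M. bind_pmf M (combined_step n lam1 D lam2)) ^^ t) (init_state n D)"

definition iter_cost :: "nat \<Rightarrow> nat \<Rightarrow> nat \<Rightarrow> bool \<times> bool list \<Rightarrow> nat" where
  "iter_cost n lam1 lam2 s =
     (if snd s = replicate n True then 0 else if fst s then 2 * lam2 else lam1)"

text \<open>Expected number of fitness evaluations (1 for the initial point).\<close>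
definition expected_evals :: "nat \<Rightarrow> nat \<Rightarrow> nat \<Rightarrow> nat \<Rightarrow> ennreal" where
  "expected_evals n lam1 D lam2 =
     1 + (\<Sum>t. \<integral>\<^sup>+ s. ennreal (real (iter_cost n lam1 lam2 s))
                   \<partial>measure_pmf (state_after n lam1 D lam2 t))"

end

theory Submission
  imports Defs "HOL-Real_Asymp.Real_Asymp"
begin

text \<open>
  Both phases are analysed with the fitness-level method, phrased as a potential argument:
  if a nonnegative potential on the states of a Markov chain drops in expectation by at least
  the cost of every step, then it bounds the expected total cost.
  Level \<open>j\<close> (distance \<open>j\<close> from the optimum) gets weight \<open>\<lambda>\<^sub>1 + e\<^sup>2 n / j\<close> in the EA phase,
  the inverse of the probability that one iteration leaves it; if \<open>\<lambda>\<^sub>1\<close> is large, a jump of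
  \<open>k \<approx> \<lambda>\<^sub>1 / ln ln n\<close> levels succeeds with probability \<open>\<ge> 1/2\<close> as long as \<open>j \<ge> n / k\<close>, and the
  weight becomes \<open>2 \<lambda>\<^sub>1 / k\<close> per level there.
  In the GA phase one iteration improves with probability \<open>\<Omega>(min 1 (\<lambda>\<^sub>2\<^sup>2 j / n))\<close>:
  \<open>\<ell>\<close> is concentrated around \<open>\<lambda>\<^sub>2\<close> by Chebyshev, some mutant flips a zero-bit with the stated
  probability, and the crossover then keeps exactly that bit with constant probability.
  Summing the weights, the EA costs \<open>O(\<lambda>\<^sub>1 D + n ln (n / D) + n \<lambda>\<^sub>1 / k)\<close> and the GA
  \<open>O(\<lambda>\<^sub>2 D + (n / \<lambda>\<^sub>2) ln D)\<close>, and the growth conditions make every term \<open>O(n ln ln n)\<close>.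
\<close>

section \<open>Probabilities of discrete distributions\<close>

lemma sample_list_eq_replicate_pmf: "sample_list k M = replicate_pmf k M"
  by (induction k) auto

lemma prob_bind_pmf:
  "measure_pmf.prob (bind_pmf M f) X = measure_pmf.expectation M (\<lambda>x. measure_pmf.prob (f x) X)"
proof -
  have int: "integrable (measure_pmf M) (\<lambda>x. measure_pmf.prob (f x) X)"
    by (rule measure_pmf.integrable_const_bound[where B=1]) auto
  have "emeasure (measure_pmf (bind_pmf M f)) X = (\<integral>\<^sup>+x. ennreal (measure_pmf.prob (f x) X) \<partial>M)"
    by (subst emeasure_bind_pmf) (simp add: measure_pmf.emeasure_eq_measure)
  also have "\<dots> = ennreal (measure_pmf.expectation M (\<lambda>x. measure_pmf.prob (f x) X))"
    by (rule nn_integral_eq_integral[OF int]) auto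
  finally show ?thesis
    by (simp add: measure_pmf.emeasure_eq_measure)
qed

lemma prob_bind_pmf_ge:
  assumes "\<And>x. x \<in> set_pmf M \<Longrightarrow> Q x \<Longrightarrow> c \<le> measure_pmf.prob (f x) X" "0 \<le> c"
  shows "c * measure_pmf.prob M {x. Q x} \<le> measure_pmf.prob (bind_pmf M f) X"
proof -
  have "c * measure_pmf.prob M {x. Q x} = measure_pmf.expectation M (\<lambda>x. c * indicator {x. Q x} x)"
    by simp
  also have "\<dots> \<le> measure_pmf.expectation M (\<lambda>x. measure_pmf.prob (f x) X)"
  proof (rule integral_mono_AE)
    show "integrable (measure_pmf M) (\<lambda>x. c * indicator {x. Q x} x)"
      by (rule measure_pmf.integrable_const_bound[where B="\<bar>c\<bar>"]) (auto simp: indicator_def)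
    show "integrable (measure_pmf M) (\<lambda>x. measure_pmf.prob (f x) X)"
      by (rule measure_pmf.integrable_const_bound[where B=1]) auto
  qed (use assms in \<open>auto simp: AE_measure_pmf_iff indicator_def\<close>)
  finally show ?thesis by (simp add: prob_bind_pmf)
qed

lemma prob_replicate_pmf_all:
  "measure_pmf.prob (replicate_pmf k M) {ys. \<forall>y\<in>set ys. P y} = measure_pmf.prob M {y. P y} ^ k"
proof (induction k)
  case 0
  then show ?case by (simp add: measure_pmf_single)
next
  case (Suc k)
  have eq: "measure_pmf.prob (replicate_pmf k M) {y. P x \<and> (\<forall>x\<in>set y. P x)}
     = indicator {y. P y} x * measure_pmf.prob M {y. P y} ^ k" for x
    using Suc by (auto simp: indicator_def)
  have "measure_pmf.prob (replicate_pmf (Suc k) M) {ys. \<forall>y\<in>set ys. P y}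
      = measure_pmf.expectation M (\<lambda>y. indicator {y. P y} y * measure_pmf.prob M {y. P y} ^ k)"
    by (simp add: prob_bind_pmf map_pmf_def[symmetric] eq)
  also have "\<dots> = measure_pmf.prob M {y. P y} ^ Suc k" by simp
  finally show ?case .
qed

lemma prob_replicate_pmf_ex:
  "measure_pmf.prob (replicate_pmf k M) {ys. \<exists>y\<in>set ys. P y}
     = 1 - (1 - measure_pmf.prob M {y. P y}) ^ k"
proof -
  have "measure_pmf.prob (replicate_pmf k M) {ys. \<exists>y\<in>set ys. P y}
      = 1 - measure_pmf.prob (replicate_pmf k M) {ys. \<forall>y\<in>set ys. \<not> P y}"
    by (subst measure_pmf.prob_compl[symmetric]) (auto intro!: arg_cong[where f="measure_pmf.prob _"])
  moreover have "measure_pmf.prob M {y. \<not> P y} = 1 - measure_pmf.prob M {y. P y}"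
    by (subst measure_pmf.prob_compl[symmetric]) (auto intro!: arg_cong[where f="measure_pmf.prob _"])
  ultimately show ?thesis by (simp add: prob_replicate_pmf_all)
qed

lemma card_nat_set_shift:
  fixes X :: "nat set"
  assumes "finite X"
  shows "card X = card {i. Suc i \<in> X} + (if 0 \<in> X then 1 else 0)"
proof -
  have fin: "finite {i. Suc i \<in> X}"
    using finite_vimageI[OF assms, of Suc] by (simp add: vimage_def)
  have eq: "X = Suc ` {i. Suc i \<in> X} \<union> (X \<inter> {0})"
  proof (rule set_eqI)
    fix x show "x \<in> X \<longleftrightarrow> x \<in> Suc ` {i. Suc i \<in> X} \<union> (X \<inter> {0})"
      by (cases x) auto
  qed
  have "card X = card (Suc ` {i. Suc i \<in> X}) + card (X \<inter> {0})"
    by (subst eq, rule card_Un_disjoint) (use fin in auto)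
  also have "card (Suc ` {i. Suc i \<in> X}) = card {i. Suc i \<in> X}"
    by (rule card_image) auto
  finally show ?thesis by (auto simp: Int_insert_right)
qed

lemma prob_replicate_bernoulli_pattern:
  assumes "0 \<le> p" "p \<le> 1"
  shows "S \<subseteq> {..<n} \<Longrightarrow> A \<subseteq> S \<Longrightarrow>
    measure_pmf.prob (replicate_pmf n (bernoulli_pmf p)) {m. \<forall>i\<in>S. m!i = (i\<in>A)}
      = p ^ card A * (1-p) ^ card (S - A)"
proof (induction n arbitrary: S A)
  case 0
  then show ?case by simp
next
  case (Suc n)
  define S' where "S' = {i. Suc i \<in> S}"
  define A' where "A' = {i. Suc i \<in> A}"
  have S'_sub: "S' \<subseteq> {..<n}" "A' \<subseteq> S'" using Suc.prems by (auto simp: S'_def A'_def)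
  have finS: "finite S" using Suc.prems finite_subset by blast
  have finA: "finite A" using Suc.prems finS finite_subset by blast
  have pattern_Cons: "{m. \<forall>i\<in>S. (c # m)!i = (i\<in>A)} =
      (if 0 \<in> S \<and> c \<noteq> (0 \<in> A) then {} else {m. \<forall>i\<in>S'. m!i = (i\<in>A')})" for c
  proof -
    have "(\<forall>i\<in>S. (c # m)!i = (i\<in>A)) \<longleftrightarrow> (0 \<in> S \<longrightarrow> c = (0 \<in> A)) \<and> (\<forall>i\<in>S'. m!i = (i\<in>A'))"
      for m
      unfolding S'_def A'_def by (auto simp: nth_Cons split: nat.splits)
    then show ?thesis by auto
  qed
  have card_A: "card A = card A' + (if 0 \<in> A then 1 else 0)"
    unfolding A'_def by (rule card_nat_set_shift[OF finA])
  have card_SA: "card (S - A) = card (S' - A') + (if 0 \<in> S - A then 1 else 0)"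
    using card_nat_set_shift[of "S - A"] finS by (simp add: S'_def A'_def set_diff_eq)
  have IH: "measure_pmf.prob (replicate_pmf n (bernoulli_pmf p))
      (if b then {} else {m. \<forall>i\<in>S'. m!i = (i\<in>A')})
      = (if b then 0 else p ^ card A' * (1-p) ^ card (S' - A'))" for b
    using Suc.IH[OF S'_sub] by simp
  have "measure_pmf.prob (replicate_pmf (Suc n) (bernoulli_pmf p)) {m. \<forall>i\<in>S. m!i = (i\<in>A)}
     = measure_pmf.expectation (bernoulli_pmf p) (\<lambda>c.
         if 0 \<in> S \<and> c \<noteq> (0 \<in> A) then 0 else p ^ card A' * (1-p) ^ card (S' - A'))"
    by (simp add: prob_bind_pmf map_pmf_def[symmetric] pattern_Cons IH del: measure_empty)
  also have "\<dots> = p ^ card A * (1-p) ^ card (S - A)"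
    using Suc.prems assms by (auto simp: card_A card_SA algebra_simps)
  finally show ?case .
qed

lemma expectation_bind_pmf_finite:
  fixes g :: "'b \<Rightarrow> real"
  assumes "finite (set_pmf M)" "\<And>x. x \<in> set_pmf M \<Longrightarrow> finite (set_pmf (f x))"
  shows "measure_pmf.expectation (bind_pmf M f) g
       = measure_pmf.expectation M (\<lambda>x. measure_pmf.expectation (f x) g)"
proof -
  have "measure_pmf.expectation (bind_pmf M f) g
      = (\<Sum>a\<in>set_pmf M. pmf M a *\<^sub>R measure_pmf.expectation (f a) g)"
    by (rule pmf_expectation_bind[OF assms(1) assms(2) subset_refl])
  also have "\<dots> = measure_pmf.expectation M (\<lambda>x. measure_pmf.expectation (f x) g)"
    by (subst integral_measure_pmf[of "set_pmf M"]) (auto simp: assms)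
  finally show ?thesis .
qed

lemma binomial_pmf_moments:
  assumes p: "0 \<le> p" "p \<le> 1"
  shows "measure_pmf.expectation (binomial_pmf n p) (\<lambda>k. real k) = n * p
    \<and> measure_pmf.expectation (binomial_pmf n p) (\<lambda>k. real k ^ 2) = n * p * (1 - p) + (n * p) ^ 2"
proof (induction n)
  case 0
  then show ?case using p by (simp add: binomial_pmf_0)
next
  case (Suc n)
  let ?B = "binomial_pmf n p"
  have pp: "p \<in> {0..1}" using p by auto
  have fin: "finite (set_pmf ?B)" using pp by auto
  have E: "measure_pmf.expectation (binomial_pmf (Suc n) p) g =
      measure_pmf.expectation (bernoulli_pmf p)
        (\<lambda>b. measure_pmf.expectation ?B (\<lambda>k. g ((if b then 1 else 0) + k)))"
    for g :: "nat \<Rightarrow> real"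
    unfolding binomial_pmf_Suc[OF pp]
    by (subst expectation_bind_pmf_finite) (auto simp: fin expectation_bind_pmf_finite)
  have E1: "measure_pmf.expectation ?B (\<lambda>k. real ((if b then 1 else 0) + k))
      = (if b then 1 else 0) + n * p" for b
    using Suc.IH pp by (simp add: Bochner_Integration.integral_add)
  have E2: "measure_pmf.expectation ?B (\<lambda>k. real ((if b then 1 else 0) + k) ^ 2)
     = (if b then 1 else 0) + 2 * (if b then 1 else 0) * (n * p) + (n * p * (1 - p) + (n * p) ^ 2)"
    for b
  proof -
    have "(\<lambda>k. real ((if b then 1 else 0) + k) ^ 2)
        = (\<lambda>k. (if b then 1 else 0) + (2 * (if b then 1 else 0) * real k + real k ^ 2))"
      by (auto simp: power2_eq_square algebra_simps)
    then show ?thesis using Suc.IH pp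
      by (simp add: Bochner_Integration.integral_add)
  qed
  show ?case
    using p Suc.IH by (simp add: E E1 E2 algebra_simps power2_eq_square)
qed

lemma variance_binomial_pmf:
  assumes "0 \<le> p" "p \<le> 1"
  shows "measure_pmf.variance (binomial_pmf n p) (\<lambda>k. real k) = n * p * (1 - p)"
proof -
  let ?B = "binomial_pmf n p"
  have mean: "measure_pmf.expectation ?B (\<lambda>k. real k) = n * p"
    and second: "measure_pmf.expectation ?B (\<lambda>k. real k ^ 2) = n * p * (1 - p) + (n * p) ^ 2"
    using binomial_pmf_moments[OF assms] by auto
  have "(\<lambda>k. (real k - n * p) ^ 2) = (\<lambda>k. real k ^ 2 + (- (2 * (n * p) * real k) + (n * p) ^ 2))"
    by (auto simp: power2_eq_square algebra_simps)
  then show ?thesis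
    using mean second assms by (simp add: Bochner_Integration.integral_add power2_eq_square)
qed

lemma binomial_pmf_concentration:
  assumes lam: "8 \<le> lam" "lam \<le> n"
  shows "1 / 2 \<le> measure_pmf.prob (binomial_pmf n (real lam / real n))
                   {l. real lam / 2 \<le> real l \<and> l \<le> 2 * lam}"
proof -
  let ?p = "real lam / real n"
  let ?B = "binomial_pmf n ?p"
  have p: "0 \<le> ?p" "?p \<le> 1" using lam by auto
  have mean: "measure_pmf.expectation ?B (\<lambda>k. real k) = lam"
    using binomial_pmf_moments[OF p, of n] lam by auto
  have "measure_pmf.prob ?B {x \<in> space (measure_pmf ?B).
          real lam / 2 \<le> \<bar>real x - measure_pmf.expectation ?B (\<lambda>k. real k)\<bar>}
       \<le> measure_pmf.variance ?B (\<lambda>k. real k) / (real lam / 2)\<^sup>2"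
    using lam p by (intro measure_pmf.Chebyshev_inequality) auto
  also have "\<dots> \<le> 1 / 2"
  proof -
    have "measure_pmf.variance ?B (\<lambda>k. real k) \<le> lam"
      using variance_binomial_pmf[OF p, of n] lam p by (simp add: mult_left_le)
    moreover have "real lam \<le> (real lam / 2)\<^sup>2 / 2" using lam by (simp add: power2_eq_square field_simps)
    ultimately show ?thesis using lam by (simp add: field_simps)
  qed
  finally have far: "measure_pmf.prob ?B {x. real lam / 2 \<le> \<bar>real x - real lam\<bar>} \<le> 1 / 2"
    using mean by simp
  have "{x. \<not> (real lam / 2 \<le> \<bar>real x - real lam\<bar>)} \<subseteq> {l. real lam / 2 \<le> real l \<and> l \<le> 2 * lam}"
  proof
    fix x assume "x \<in> {x. \<not> (real lam / 2 \<le> \<bar>real x - real lam\<bar>)}"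
    then have "real lam / 2 \<le> real x" "real x \<le> real (2 * lam)" by (auto simp: abs_if split: if_splits)
    then show "x \<in> {l. real lam / 2 \<le> real l \<and> l \<le> 2 * lam}" by (simp only: of_nat_le_iff) simp
  qed
  then have "measure_pmf.prob ?B {x. \<not> (real lam / 2 \<le> \<bar>real x - real lam\<bar>)}
      \<le> measure_pmf.prob ?B {l. real lam / 2 \<le> real l \<and> l \<le> 2 * lam}"
    by (rule measure_pmf.finite_measure_mono) auto
  moreover have "measure_pmf.prob ?B {x. \<not> (real lam / 2 \<le> \<bar>real x - real lam\<bar>)}
      = 1 - measure_pmf.prob ?B {x. real lam / 2 \<le> \<bar>real x - real lam\<bar>}"
    by (subst measure_pmf.prob_compl[symmetric]) (auto intro!: arg_cong[where f="measure_pmf.prob _"])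
  ultimately show ?thesis using far by linarith
qed

lemma expectation_le_minus_indicator:
  fixes f :: "'a \<Rightarrow> real"
  assumes "\<And>s. s \<in> set_pmf M \<Longrightarrow> f s \<le> a - b * indicator X s" "\<And>s. \<bar>f s\<bar> \<le> B"
  shows "measure_pmf.expectation M f \<le> a - b * measure_pmf.prob M X"
proof -
  have ind: "integrable M (\<lambda>s. b * indicator X s)"
    by (rule measure_pmf.integrable_const_bound[where B="\<bar>b\<bar>"]) (auto simp: indicator_def)
  have "measure_pmf.expectation M f \<le> measure_pmf.expectation M (\<lambda>s. a - b * indicator X s)"
  proof (rule integral_mono_AE)
    show "integrable M f"
      by (rule measure_pmf.integrable_const_bound[where B=B]) (use assms(2) in auto)
  qed (use ind assms(1) in \<open>auto simp: AE_measure_pmf_iff\<close>)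
  also have "\<dots> = a - b * measure_pmf.prob M X"
    using ind by (simp add: Bochner_Integration.integral_diff)
  finally show ?thesis .
qed

section \<open>Bit strings, mutation and selection\<close>

definition ones :: "bool list \<Rightarrow> nat set" where "ones x = {i. i < length x \<and> x!i}"
definition zeros :: "bool list \<Rightarrow> nat set" where "zeros x = {i. i < length x \<and> \<not> x!i}"

lemma onemax_eq_card_ones: "onemax x = card (ones x)"
  by (simp add: onemax_def ones_def length_filter_conv_card)

lemma card_ones_add_card_zeros: "card (ones x) + card (zeros x) = length x"
proof -
  have "card (ones x \<union> zeros x) = card (ones x) + card (zeros x)"
    by (rule card_Un_disjoint) (auto simp: ones_def zeros_def)
  moreover have "ones x \<union> zeros x = {..<length x}" by (auto simp: ones_def zeros_def)
  ultimately show ?thesis by simp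
qed

lemma card_zeros: "card (zeros x) = length x - onemax x"
  using card_ones_add_card_zeros[of x] by (simp add: onemax_eq_card_ones)

lemma onemax_le_length: "onemax x \<le> length x"
  by (simp add: onemax_def)

lemma onemax_replicate_True: "onemax (replicate n True) = n"
  by (simp add: onemax_def)

lemma onemax_eq_length_imp_replicate_True:
  assumes "onemax x = length x" shows "x = replicate (length x) True"
proof -
  have "card (ones x) = card {..<length x}" using assms by (simp add: onemax_eq_card_ones)
  then have "ones x = {..<length x}" by (intro card_subset_eq) (auto simp: ones_def)
  then show ?thesis by (intro nth_equalityI) (auto simp: ones_def)
qed

lemma length_flip_set [simp]: "length (flip_set S x) = length x"
  by (simp add: flip_set_def)

lemma nth_flip_set [simp]: "i < length x \<Longrightarrow> flip_set S x ! i = (if i \<in> S then \<not> x!i else x!i)"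
  by (simp add: flip_set_def)

lemma flip_set_changed_positions:
  "S \<subseteq> {..<length x} \<Longrightarrow> {i. i < length x \<and> flip_set S x ! i \<noteq> x!i} = S"
  by (auto split: if_splits)

lemma card_Int_ones_add_card_Int_zeros:
  assumes "S \<subseteq> {..<length x}"
  shows "card (S \<inter> ones x) + card (S \<inter> zeros x) = card S"
proof -
  have fin: "finite S" using assms finite_subset by blast
  have "S = (S \<inter> ones x) \<union> (S \<inter> zeros x)" using assms by (auto simp: ones_def zeros_def)
  then have "card S = card ((S \<inter> ones x) \<union> (S \<inter> zeros x))" by simp
  also have "\<dots> = card (S \<inter> ones x) + card (S \<inter> zeros x)"
    by (rule card_Un_disjoint) (use fin in \<open>auto simp: ones_def zeros_def\<close>)
  finally show ?thesis by simp
qed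

lemma onemax_flip_set:
  assumes "S \<subseteq> {..<length x}"
  shows "onemax (flip_set S x) + card (S \<inter> ones x) = onemax x + card (S \<inter> zeros x)"
proof -
  have fin: "finite (ones x)" "finite (zeros x)" by (auto simp: ones_def zeros_def)
  have "ones (flip_set S x) = (ones x - S) \<union> (S \<inter> zeros x)"
    using assms by (auto simp: ones_def zeros_def)
  then have "onemax (flip_set S x) = card (ones x - S) + card (S \<inter> zeros x)"
    unfolding onemax_eq_card_ones
    by (simp only:) (rule card_Un_disjoint; use fin in \<open>auto simp: ones_def zeros_def\<close>)
  moreover have "card (ones x) = card (ones x - S) + card (S \<inter> ones x)"
  proof -
    have "ones x = (ones x - S) \<union> (S \<inter> ones x)" by auto
    then have "card (ones x) = card ((ones x - S) \<union> (S \<inter> ones x))" by simp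
    also have "\<dots> = card (ones x - S) + card (S \<inter> ones x)"
      by (rule card_Un_disjoint) (use fin in auto)
    finally show ?thesis .
  qed
  ultimately show ?thesis by (simp add: onemax_eq_card_ones)
qed

lemma onemax_flip_set_zeros:
  assumes "S \<subseteq> zeros x"
  shows "onemax (flip_set S x) = onemax x + card S"
proof -
  have "S \<subseteq> {..<length x}" "S \<inter> ones x = {}" "S \<inter> zeros x = S"
    using assms by (auto simp: ones_def zeros_def)
  then show ?thesis using onemax_flip_set[of S x] by simp
qed

lemma onemax_flip_set_gain_iff:
  assumes "S \<subseteq> {..<length x}" "card S = l"
  shows "onemax x + 2 \<le> onemax (flip_set S x) + l \<longleftrightarrow> S \<inter> zeros x \<noteq> {}"
proof -
  have "onemax (flip_set S x) + card (S \<inter> ones x) = onemax x + card (S \<inter> zeros x)"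
    by (rule onemax_flip_set[OF assms(1)])
  moreover have "card (S \<inter> ones x) + card (S \<inter> zeros x) = l"
    using card_Int_ones_add_card_Int_zeros[OF assms(1)] assms(2) by simp
  moreover have "S \<inter> zeros x \<noteq> {} \<longleftrightarrow> 1 \<le> card (S \<inter> zeros x)"
    by (simp add: zeros_def Suc_le_eq card_gt_0_iff)
  ultimately show ?thesis by linarith
qed

lemma flip_set_Cons:
  "flip_set S (b # bs) = (if 0 \<in> S then \<not> b else b) # flip_set {i. Suc i \<in> S} bs"
  unfolding flip_set_def by (simp add: map_upt_Suc del: upt_Suc)

lemma bitwise_mut_eq_map_mask:
  "bitwise_mut p x = map_pmf (\<lambda>m. flip_set {i. i < length x \<and> m!i} x)
      (replicate_pmf (length x) (bernoulli_pmf p))"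
proof (induction x)
  case Nil
  then show ?case by (simp add: flip_set_def)
next
  case (Cons b bs)
  then show ?case by (simp add: map_bind_pmf bind_map_pmf flip_set_Cons)
qed

lemma length_bitwise_mut: "y \<in> set_pmf (bitwise_mut p x) \<Longrightarrow> length y = length x"
  by (auto simp: bitwise_mut_eq_map_mask)

lemma crossover_eq_map_mask:
  "length y = length x \<Longrightarrow>
   crossover p x y = map_pmf (\<lambda>m. map (\<lambda>i. if m!i then y!i else x!i) [0..<length x])
      (replicate_pmf (length x) (bernoulli_pmf p))"
proof (induction x arbitrary: y)
  case Nil
  then show ?case by simp
next
  case (Cons a as)
  then obtain b bs where y: "y = b # bs" and l: "length bs = length as" by (cases y) auto
  show ?case
    unfolding y
    by (simp add: Cons.IH[OF l] map_bind_pmf bind_map_pmf map_upt_Suc del: upt_Suc)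
       (simp add: nth_Cons_0 if_bool_eq_conj)
qed

lemma length_crossover:
  "length x' = length x \<Longrightarrow> z \<in> set_pmf (crossover p x x') \<Longrightarrow> length z = length x"
  by (auto simp: crossover_eq_map_mask)

lemma crossover_mask_eq_flip_set:
  assumes "length x' = length x"
  shows "map (\<lambda>i. if m!i then x'!i else x!i) [0..<length x]
       = flip_set ({i. i < length x \<and> x'!i \<noteq> x!i} \<inter> {i. m!i}) x"
  by (rule nth_equalityI) (use assms in auto)

definition subsets_card :: "nat \<Rightarrow> nat \<Rightarrow> nat set set" where
  "subsets_card n l = {S. S \<subseteq> {..<n} \<and> card S = l}"

lemma finite_subsets_card: "finite (subsets_card n l)"
  unfolding subsets_card_def by (rule finite_subset[of _ "Pow {..<n}"]) auto

lemma subsets_card_nonempty: "l \<le> n \<Longrightarrow> subsets_card n l \<noteq> {}"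
  by (auto simp: subsets_card_def intro!: exI[of _ "{..<l}"])

lemma set_mut_ell:
  "l \<le> length x \<Longrightarrow> set_pmf (mut_ell l x) = (\<lambda>S. flip_set S x) ` subsets_card (length x) l"
  unfolding mut_ell_def subsets_card_def[symmetric]
  using finite_subsets_card subsets_card_nonempty by simp

lemma ex_best_idx:
  assumes "ys \<noteq> []"
  shows "\<exists>i<length ys. \<forall>j<length ys. onemax (ys!j) \<le> onemax (ys!i)"
proof -
  have "Max (onemax ` set ys) \<in> onemax ` set ys" using assms by (intro Max_in) auto
  then obtain i where i: "i < length ys" "onemax (ys!i) = Max (onemax ` set ys)"
    by (auto simp: in_set_conv_nth)
  have "onemax (ys!j) \<le> onemax (ys!i)" if "j < length ys" for j
    using that i by (simp add: Max_ge)
  then show ?thesis using i by blast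
qed

lemma
  assumes "ys \<noteq> []"
  shows best_first_mem: "best_first ys \<in> set ys"
    and onemax_le_best_first: "y \<in> set ys \<Longrightarrow> onemax y \<le> onemax (best_first ys)"
proof -
  obtain i where "i \<in> best_idx ys" using ex_best_idx[OF assms] by (auto simp: best_idx_def)
  then have L: "(LEAST i. i \<in> best_idx ys) \<in> best_idx ys" by (rule LeastI)
  show "best_first ys \<in> set ys" using L by (simp add: best_first_def best_idx_def)
  assume "y \<in> set ys"
  then obtain j where "j < length ys" "ys!j = y" by (auto simp: in_set_conv_nth)
  then show "onemax y \<le> onemax (best_first ys)" using L by (auto simp: best_first_def best_idx_def)
qed

lemma
  assumes "ys \<noteq> []" "x' \<in> set_pmf (best_uniform ys)"
  shows best_uniform_mem: "x' \<in> set ys"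
    and onemax_le_best_uniform: "y \<in> set ys \<Longrightarrow> onemax y \<le> onemax x'"
proof -
  have "best_idx ys \<noteq> {}" "finite (best_idx ys)"
    using ex_best_idx[OF assms(1)] by (auto simp: best_idx_def)
  then obtain i where i: "i \<in> best_idx ys" "x' = ys!i"
    using assms(2) by (auto simp: best_uniform_def)
  show "x' \<in> set ys" using i by (auto simp: best_idx_def)
  assume "y \<in> set ys"
  then obtain j where "j < length ys" "ys!j = y" by (auto simp: in_set_conv_nth)
  then show "onemax y \<le> onemax x'" using i by (auto simp: best_idx_def)
qed

lemma prob_elitist_best_ge:
  "1 - (1 - measure_pmf.prob M {z. onemax x + k \<le> onemax z}) ^ lam
   \<le> measure_pmf.prob (bind_pmf (replicate_pmf lam M)
        (\<lambda>ys. let y = best_first ys in return_pmf (if onemax x \<le> onemax y then y else x)))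
        {y. onemax x + k \<le> onemax y}"
proof -
  let ?g = "\<lambda>ys. if onemax x \<le> onemax (best_first ys) then best_first ys else x"
  have "{ys. \<exists>z\<in>set ys. onemax x + k \<le> onemax z} \<subseteq> ?g -` {y. onemax x + k \<le> onemax y}"
  proof
    fix ys assume "ys \<in> {ys. \<exists>z\<in>set ys. onemax x + k \<le> onemax z}"
    then obtain z where "z \<in> set ys" "onemax x + k \<le> onemax z" by auto
    moreover from this have "onemax z \<le> onemax (best_first ys)"
      by (intro onemax_le_best_first) auto
    ultimately show "ys \<in> ?g -` {y. onemax x + k \<le> onemax y}" by auto
  qed
  then have "measure_pmf.prob (replicate_pmf lam M) {ys. \<exists>z\<in>set ys. onemax x + k \<le> onemax z}
      \<le> measure_pmf.prob (map_pmf ?g (replicate_pmf lam M)) {y. onemax x + k \<le> onemax y}"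
    by (simp add: measure_pmf.finite_measure_mono)
  then show ?thesis by (simp add: prob_replicate_pmf_ex map_pmf_def Let_def)
qed

section \<open>Elementary estimates\<close>

lemma one_minus_power_le_inverse:
  fixes q :: real
  assumes "0 \<le> q" "q \<le> 1"
  shows "(1 - q) ^ m \<le> 1 / (1 + m * q)"
proof -
  have b: "1 + m * q \<le> (1 + q) ^ m" using Bernoulli_inequality[of q m] assms by simp
  have "(1 - q) ^ m * (1 + q) ^ m = (1 - q^2) ^ m"
    by (simp add: power_mult_distrib[symmetric] power2_eq_square algebra_simps)
  also have "\<dots> \<le> 1" using assms by (intro power_le_one) (auto simp: power2_eq_square mult_le_one)
  finally have "(1 - q) ^ m * (1 + m * q) \<le> 1"
    using b assms by (smt (verit) mult_left_mono zero_le_power)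
  moreover have "0 < 1 + m * q" using assms by (simp add: add_pos_nonneg)
  ultimately show ?thesis by (simp add: field_simps)
qed

lemma one_minus_power_ge:
  fixes q :: real
  assumes "0 \<le> q" "q \<le> 1"
  shows "m * q / (1 + m * q) \<le> 1 - (1 - q) ^ m"
proof -
  have "0 < 1 + m * q" using assms by (simp add: add_pos_nonneg)
  then have "m * q / (1 + m * q) = 1 - 1 / (1 + m * q)" by (simp add: field_simps)
  then show ?thesis using one_minus_power_le_inverse[OF assms, of m] by simp
qed

lemma divide_one_plus_mono:
  fixes a b :: real
  assumes "0 \<le> a" "a \<le> b"
  shows "a / (1 + a) \<le> b / (1 + b)"
  using assms by (simp add: field_simps)

lemma divide_one_plus_cancel:
  fixes L a :: real
  assumes "0 < a"
  shows "(L + L / a) * (a / (1 + a)) = L"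
proof -
  have "L + L / a = L * (1 + a) / a" using assms by (simp add: field_simps)
  then show ?thesis using assms by simp
qed

lemma exp_minus_two_le_power:
  assumes "2 \<le> m"
  shows "exp (-2) \<le> (1 - 1 / real m) ^ m"
proof -
  define y where "y = 1 / (real m - 1)"
  have y0: "0 < y" using assms by (simp add: y_def)
  have "(1 + y) ^ m \<le> exp y ^ m"
    by (rule power_mono) (use y0 in auto)
  also have "\<dots> = exp (m * y)" by (simp add: exp_of_nat_mult)
  also have "\<dots> \<le> exp 2" using assms by (simp add: y_def field_simps)
  finally have A: "(1 + y) ^ m \<le> exp 2" .
  have "(1 - 1 / real m) * (1 + y) = 1" using assms by (simp add: y_def field_simps)
  then have "(1 - 1 / real m) ^ m * (1 + y) ^ m = 1" by (metis power_mult_distrib power_one)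
  then have "(1 - 1 / real m) ^ m = 1 / (1 + y) ^ m"
    using y0 by (simp add: field_simps)
  also have "\<dots> \<ge> 1 / exp 2" using A y0 by (intro divide_left_mono) auto
  finally show ?thesis by (simp add: exp_minus field_simps)
qed

lemma exp_minus_two_le_power_diff:
  assumes "2 \<le> n" "k \<le> n"
  shows "exp (-2) \<le> (1 - 1 / real n) ^ (n - k)"
proof -
  have "(1 - 1 / real n) ^ n \<le> (1 - 1 / real n) ^ (n - k)"
    by (rule power_decreasing) (use assms in auto)
  then show ?thesis using exp_minus_two_le_power[OF assms(1)] by linarith
qed

lemma harmonic_tail_le_ln_diff:
  assumes "1 \<le> a" "a \<le> b"
  shows "(\<Sum>j\<in>{Suc a..b}. 1 / real j) \<le> ln (real b) - ln (real a)"
  using assms(2)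
proof (induction b rule: dec_induct)
  case base then show ?case by simp
next
  case (step m)
  have m1: "1 \<le> m" using assms step.hyps by simp
  have "ln (real m / real (Suc m)) \<le> real m / real (Suc m) - 1"
    by (rule ln_le_minus_one) (use m1 in auto)
  moreover have "real m / real (Suc m) - 1 = - (1 / real (Suc m))" by (simp add: field_simps)
  moreover have "ln (real m / real (Suc m)) = ln (real m) - ln (real (Suc m))"
    using m1 by (simp add: ln_div)
  moreover have "{Suc a..Suc m} = insert (Suc m) {Suc a..m}" using step.hyps by auto
  ultimately show ?case using step.IH by simp
qed

lemma harmonic_le_one_plus_ln: "(\<Sum>j\<in>{1..b}. 1 / real j) \<le> 1 + ln (real b)"
proof (cases "b = 0")
  case False
  then have "{1..b} = insert 1 {Suc 1..b}" by auto
  moreover have "(\<Sum>j\<in>{Suc 1..b}. 1 / real j) \<le> ln (real b) - ln (real 1)"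
    by (rule harmonic_tail_le_ln_diff) (use False in auto)
  ultimately show ?thesis by simp
qed simp

lemma Suc_mult_choose_Suc: "Suc k * (m choose Suc k) = (m - k) * (m choose k)"
proof (cases m)
  case (Suc m')
  then show ?thesis using Suc_times_binomial[of k m'] binomial_absorb_comp[of "Suc m'" k] by simp
qed simp

lemma choose_diff_le_power:
  assumes "d \<le> n"
  shows "l \<le> n \<Longrightarrow> real ((n - d) choose l) \<le> (1 - real d / real n) ^ l * real (n choose l)"
proof (induction l)
  case 0
  then show ?case by simp
next
  case (Suc l)
  have n1: "1 \<le> n" using Suc.prems by simp
  have IH: "real ((n - d) choose l) \<le> (1 - real d / real n) ^ l * real (n choose l)"
    using Suc by simp
  have q0: "0 \<le> 1 - real d / real n" using assms n1 by simp
  have a: "real (Suc l) * real ((n - d) choose Suc l) = real (n - d - l) * real ((n - d) choose l)"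
    using Suc_mult_choose_Suc[of l "n - d"] by (metis of_nat_mult)
  have b: "real (Suc l) * real (n choose Suc l) = real (n - l) * real (n choose l)"
    using Suc_mult_choose_Suc[of l n] by (metis of_nat_mult)
  have factor: "real (n - d - l) \<le> (1 - real d / real n) * real (n - l)"
  proof (cases "d + l \<le> n")
    case True
    then have "real (n - d - l) = real n - d - l" "real (n - l) = real n - l" by auto
    moreover have "(real n - d - l) * n \<le> (real n - d) * (real n - l)"
      by (simp add: algebra_simps)
    ultimately show ?thesis using n1 by (simp add: field_simps)
  qed (use q0 in simp)
  have "real (Suc l) * real ((n - d) choose Suc l)
      \<le> (1 - real d / real n) * real (n - l) * ((1 - real d / real n) ^ l * real (n choose l))"
    unfolding a by (rule mult_mono[OF factor IH]) (use q0 in auto)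
  also have "\<dots> = (1 - real d / real n) ^ Suc l * (real (n - l) * real (n choose l))"
    by (simp add: algebra_simps)
  also have "\<dots> = real (Suc l) * ((1 - real d / real n) ^ Suc l * real (n choose Suc l))"
    unfolding b[symmetric] by (simp only: mult_ac)
  finally show ?case by (rule mult_left_le_imp_le) simp
qed

lemma card_multiples_below:
  assumes "1 \<le> k"
  shows "real (card {j\<in>{1..n}. k * j < n}) \<le> real n / real k"
proof -
  have "{j\<in>{1..n}. k * j < n} \<subseteq> {1..n div k}"
    using assms by (auto simp: less_eq_div_iff_mult_less_eq mult.commute)
  then have "card {j\<in>{1..n}. k * j < n} \<le> n div k" using card_mono[of "{1..n div k}"] by force
  then have "real (card {j\<in>{1..n}. k * j < n}) \<le> real (n div k)" by simp
  also have "\<dots> \<le> real n / real k" by (rule of_nat_div_le_of_nat)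
  finally show ?thesis .
qed

section \<open>The (1+\<open>\<lambda>\<close>) EA\<close>

lemma prob_bitwise_mut_gain_ge:
  fixes x :: "bool list" and n k :: nat
  assumes n: "length x = n" "n \<ge> 1" and k: "k \<le> card (zeros x)"
  shows "real (card (zeros x) choose k) * (1 / real n) ^ k * (1 - 1 / real n) ^ (n - k)
      \<le> measure_pmf.prob (bitwise_mut (1 / real n) x) {z. onemax x + k \<le> onemax z}"
proof -
  let ?p = "1 / real n"
  let ?R = "replicate_pmf n (bernoulli_pmf ?p)"
  let ?flip = "\<lambda>m. flip_set {i. i < length x \<and> m!i} x"
  define F where "F = {A. A \<subseteq> zeros x \<and> card A = k}"
  define E where "E = (\<lambda>A. {m::bool list. \<forall>i\<in>{..<n}. m!i = (i\<in>A)})"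
  have p01: "0 \<le> ?p" "?p \<le> 1" using n by auto
  have finz: "finite (zeros x)" by (simp add: zeros_def)
  have finF: "finite F" unfolding F_def using finz by (simp add: finite_subset)
  have zsub: "zeros x \<subseteq> {..<n}" using n by (auto simp: zeros_def)
  have EA: "measure_pmf.prob ?R (E A) = ?p ^ k * (1 - ?p) ^ (n - k)" if "A \<in> F" for A
  proof -
    have A: "A \<subseteq> {..<n}" "card A = k" "finite A" using that zsub finz unfolding F_def
      by (auto intro: finite_subset)
    then have "card ({..<n} - A) = n - k" by (simp add: card_Diff_subset)
    then show ?thesis
      unfolding E_def using prob_replicate_bernoulli_pattern[OF p01, of "{..<n}" n A] A by simp
  qed
  have disj: "disjoint_family_on E F"
    unfolding disjoint_family_on_def
  proof (intro ballI impI)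
    fix A B assume "A \<in> F" "B \<in> F" "A \<noteq> B"
    then obtain i where "i \<in> A \<longleftrightarrow> i \<notin> B" "i < n" using zsub unfolding F_def by blast
    then show "E A \<inter> E B = {}" unfolding E_def by auto
  qed
  have "real (card (zeros x) choose k) * ?p ^ k * (1 - ?p) ^ (n - k)
      = (\<Sum>A\<in>F. measure_pmf.prob ?R (E A))"
    using EA by (simp add: F_def n_subsets[OF finz])
  also have "\<dots> = measure_pmf.prob ?R (\<Union>A\<in>F. E A)"
    by (rule measure_pmf.finite_measure_finite_Union[OF finF _ disj, symmetric]) auto
  also have "\<dots> \<le> measure_pmf.prob ?R (?flip -` {z. onemax x + k \<le> onemax z})"
  proof (rule measure_pmf.finite_measure_mono)
    show "(\<Union>A\<in>F. E A) \<subseteq> ?flip -` {z. onemax x + k \<le> onemax z}"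
    proof
      fix m assume "m \<in> (\<Union>A\<in>F. E A)"
      then obtain A where A: "A \<in> F" "m \<in> E A" by blast
      have "{i. i < length x \<and> m!i} = A" using A zsub n unfolding E_def F_def by auto
      moreover have "onemax (flip_set A x) = onemax x + k"
        using A onemax_flip_set_zeros[of A x] unfolding F_def by auto
      ultimately show "m \<in> ?flip -` {z. onemax x + k \<le> onemax z}" by simp
    qed
  qed simp
  also have "\<dots> = measure_pmf.prob (bitwise_mut ?p x) {z. onemax x + k \<le> onemax z}"
    using n(1) by (simp add: bitwise_mut_eq_map_mask)
  finally show ?thesis .
qed

lemma prob_bitwise_mut_gain_one_ge:
  assumes "2 \<le> n" "length x = n" "0 < n - onemax x"
  shows "real (n - onemax x) / (real n * exp 2)
      \<le> measure_pmf.prob (bitwise_mut (1 / real n) x) {z. onemax x + 1 \<le> onemax z}"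
proof -
  have cz: "card (zeros x) = n - onemax x" using card_zeros[of x] assms by simp
  have "real (n - onemax x) / (real n * exp 2)
      = real (n - onemax x) / real n * exp (-2)" by (simp add: exp_minus field_simps)
  also have "\<dots> \<le> real (n - onemax x) / real n * (1 - 1 / real n) ^ (n - 1)"
    using exp_minus_two_le_power_diff[OF assms(1), of 1] assms by (intro mult_left_mono) auto
  also have "\<dots> \<le> measure_pmf.prob (bitwise_mut (1 / real n) x) {z. onemax x + 1 \<le> onemax z}"
    using prob_bitwise_mut_gain_ge[of x n 1] assms cz by simp
  finally show ?thesis .
qed

text \<open>\<open>(d choose k) n\<^sup>-\<^sup>k \<ge> (d / (k n))\<^sup>k \<ge> k\<^sup>-\<^sup>2\<^sup>k\<close> when \<open>n \<le> k d\<close>.\<close>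

lemma prob_bitwise_mut_jump_ge:
  assumes n: "2 \<le> n" and len: "length x = n"
    and k: "1 \<le> k" "k \<le> n - onemax x" "n \<le> k * (n - onemax x)"
  shows "(1 / real k ^ 2) ^ k * exp (-2)
      \<le> measure_pmf.prob (bitwise_mut (1 / real n) x) {z. onemax x + k \<le> onemax z}"
proof -
  let ?d = "n - onemax x"
  have cz: "card (zeros x) = ?d" using card_zeros[of x] len by simp
  have "1 / real k ^ 2 \<le> real ?d / real k * (1 / real n)"
  proof -
    have "real n \<le> real k * real ?d" using k(3) by (metis of_nat_le_iff of_nat_mult)
    then show ?thesis using k n by (simp add: field_simps power2_eq_square)
  qed
  then have "(1 / real k ^ 2) ^ k \<le> (real ?d / real k) ^ k * (1 / real n) ^ k"
    by (metis power_mono power_mult_distrib zero_le_divide_1_iff of_nat_0_le_iff zero_le_power2)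
  also have "\<dots> \<le> real (?d choose k) * (1 / real n) ^ k"
    using binomial_ge_n_over_k_pow_k[of k ?d] k by (intro mult_right_mono) auto
  finally have "(1 / real k ^ 2) ^ k * exp (-2) \<le> real (?d choose k) * (1 / real n) ^ k * exp (-2)"
    by (simp add: mult_right_mono)
  also have "\<dots> \<le> real (?d choose k) * (1 / real n) ^ k * (1 - 1 / real n) ^ (n - k)"
    using exp_minus_two_le_power_diff[OF n, of k] k by (intro mult_left_mono) auto
  also have "\<dots> \<le> measure_pmf.prob (bitwise_mut (1 / real n) x) {z. onemax x + k \<le> onemax z}"
    using prob_bitwise_mut_gain_ge[of x n k] len n k cz by simp
  finally show ?thesis .
qed

lemma ea_step_support:
  assumes "lam \<ge> 1" "y \<in> set_pmf (ea_step n lam x)"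
  shows "length y = length x \<and> onemax x \<le> onemax y"
proof -
  obtain ys where ys: "ys \<in> set_pmf (replicate_pmf lam (bitwise_mut (1 / real n) x))"
    and y: "y = (if onemax x \<le> onemax (best_first ys) then best_first ys else x)"
    using assms(2) by (auto simp: ea_step_def sample_list_eq_replicate_pmf Let_def)
  have "ys \<noteq> []" "\<forall>z\<in>set ys. length z = length x"
    using ys assms(1) by (auto simp: set_replicate_pmf length_bitwise_mut)
  then show ?thesis using y best_first_mem[of ys] by auto
qed

lemma prob_ea_step_gain_ge:
  assumes "q \<le> measure_pmf.prob (bitwise_mut (1 / real n) x) {z. onemax x + k \<le> onemax z}"
    "0 \<le> q"
  shows "1 - (1 - q) ^ lam \<le> measure_pmf.prob (ea_step n lam x) {y. onemax x + k \<le> onemax y}"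
proof -
  have "(1 - measure_pmf.prob (bitwise_mut (1 / real n) x) {z. onemax x + k \<le> onemax z}) ^ lam
      \<le> (1 - q) ^ lam"
    using assms by (intro power_mono) auto
  then show ?thesis
    using prob_elitist_best_ge[where M = "bitwise_mut (1 / real n) x" and x = x and k = k and lam = lam]
    by (simp add: ea_step_def sample_list_eq_replicate_pmf)
qed

definition ea_weight :: "nat \<Rightarrow> nat \<Rightarrow> nat \<Rightarrow> real" where
  "ea_weight n lam j = real lam + exp 2 * real n / real j"

lemma ea_weight_nonneg: "0 \<le> ea_weight n lam j"
  by (simp add: ea_weight_def)

lemma ea_weight_antimono: "1 \<le> i \<Longrightarrow> i \<le> j \<Longrightarrow> ea_weight n lam j \<le> ea_weight n lam i"
  unfolding ea_weight_def by (auto intro!: divide_left_mono)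

lemma ea_step_leaves_level:
  assumes n: "2 \<le> n" and lam: "1 \<le> lam" and len: "length x = n" and d: "0 < n - onemax x"
  shows "real lam
    \<le> ea_weight n lam (n - onemax x) * measure_pmf.prob (ea_step n lam x) {y. onemax x + 1 \<le> onemax y}"
proof -
  let ?d = "n - onemax x"
  define q where "q = real ?d / (real n * exp 2)"
  have q0: "0 \<le> q" by (simp add: q_def)
  have q1: "q \<le> 1"
    using n by (simp add: q_def field_simps) (smt (verit) diff_le_self exp_ge_add_one_self
        mult_le_cancel_left1 of_nat_0_le_iff of_nat_le_iff)
  have "q \<le> measure_pmf.prob (bitwise_mut (1 / real n) x) {z. onemax x + 1 \<le> onemax z}"
    unfolding q_def by (rule prob_bitwise_mut_gain_one_ge[OF n len d])
  from prob_ea_step_gain_ge[OF this q0] have P: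
    "1 - (1 - q) ^ lam \<le> measure_pmf.prob (ea_step n lam x) {y. onemax x + 1 \<le> onemax y}" .
  have pos: "0 < real lam * q" using lam d n by (simp add: q_def)
  have "ea_weight n lam ?d = real lam + real lam / (real lam * q)"
    unfolding ea_weight_def q_def using pos lam by (simp add: field_simps)
  then have "real lam = ea_weight n lam ?d * (real lam * q / (1 + real lam * q))"
    using divide_one_plus_cancel[OF pos, of "real lam"] by simp
  also have "\<dots> \<le> ea_weight n lam ?d * measure_pmf.prob (ea_step n lam x) {y. onemax x + 1 \<le> onemax y}"
    using one_minus_power_ge[OF q0 q1, of lam] P ea_weight_nonneg by (intro mult_left_mono) auto
  finally show ?thesis .
qed

lemma ea_step_jump:
  assumes n: "2 \<le> n" and len: "length x = n"
    and k: "1 \<le> k" "k \<le> n - onemax x" "n \<le> k * (n - onemax x)"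
    and lam: "exp 2 * real k ^ (2 * k) \<le> real lam"
  shows "1 / 2 \<le> measure_pmf.prob (ea_step n lam x) {y. onemax x + k \<le> onemax y}"
proof -
  define q where "q = (1 / real k ^ 2) ^ k * exp (-2)"
  have q0: "0 \<le> q" by (simp add: q_def)
  have q1: "q \<le> 1"
    unfolding q_def using k by (intro mult_le_one power_le_one) auto
  have "real k ^ (2 * k) * (1 / real k ^ 2) ^ k = 1"
    using k by (simp add: power_mult power_mult_distrib[symmetric])
  then have "exp 2 * real k ^ (2 * k) * q = 1"
    by (simp add: q_def exp_minus field_simps)
  then have "1 \<le> real lam * q"
    using lam q0 by (metis mult_right_mono)
  then have "1 / (1 + 1) \<le> real lam * q / (1 + real lam * q)"
    by (intro divide_one_plus_mono) simp_all
  also have "\<dots> \<le> 1 - (1 - q) ^ lam" by (rule one_minus_power_ge[OF q0 q1])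
  also have "\<dots> \<le> measure_pmf.prob (ea_step n lam x) {y. onemax x + k \<le> onemax y}"
    using prob_ea_step_gain_ge[OF prob_bitwise_mut_jump_ge[OF n len k], folded q_def, OF q0] .
  finally show ?thesis by simp
qed

section \<open>The (1+(\<open>\<lambda>\<close>,\<open>\<lambda>\<close>)) GA\<close>

text \<open>If \<open>x'\<close> differs from \<open>x\<close> in at most \<open>2\<lambda>\<close> positions, one of them a zero-bit of \<open>x\<close>, a crossover
  offspring takes exactly that bit from \<open>x'\<close> with probability at least \<open>e\<^sup>-\<^sup>4 / \<lambda>\<close>; among \<open>\<lambda>\<close>
  offspring this happens with probability at least the following constant.\<close>

definition crossover_const :: real where "crossover_const = exp (-4) / (1 + exp (-4))"

lemma crossover_const_pos: "0 < crossover_const" and crossover_const_le_one: "crossover_const \<le> 1"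
  unfolding crossover_const_def using exp_gt_zero[of "-4"]
  by (auto simp: field_simps simp del: exp_gt_zero)

lemma prob_crossover_improves_ge:
  assumes lam: "2 \<le> lam" and len: "length x' = length x"
    and S: "S = {i. i < length x \<and> x'!i \<noteq> x!i}" "card S \<le> 2 * lam"
    and i: "i \<in> S" "\<not> x!i"
  shows "exp (-4) / real lam \<le> measure_pmf.prob (crossover (1 / real lam) x x') {z. onemax x + 1 \<le> onemax z}"
proof -
  let ?p = "1 / real lam"
  let ?R = "replicate_pmf (length x) (bernoulli_pmf ?p)"
  let ?g = "\<lambda>m. map (\<lambda>j. if m!j then x'!j else x!j) [0..<length x]"
  have p01: "0 \<le> ?p" "?p \<le> 1" using lam by auto
  have Ssub: "S \<subseteq> {..<length x}" using S by auto
  have finS: "finite S" using Ssub finite_subset by blast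
  have "(1 - ?p) ^ (2 * lam) \<le> (1 - ?p) ^ card (S - {i})"
    using S(2) finS i p01 by (intro power_decreasing) (auto simp: card_Diff_singleton)
  moreover have "exp (-2) ^ 2 \<le> ((1 - ?p) ^ lam) ^ 2"
    using exp_minus_two_le_power[OF lam] by (intro power_mono) auto
  moreover have "exp (-2) ^ 2 = exp (-4::real)"
    by (simp add: power2_eq_square exp_add[symmetric])
  ultimately have pow: "exp (-4) \<le> (1 - ?p) ^ card (S - {i})"
    by (simp add: power_mult[symmetric] mult.commute)
  have sub: "{m. \<forall>j\<in>S. m!j = (j \<in> {i})} \<subseteq> ?g -` {z. onemax x + 1 \<le> onemax z}"
  proof
    fix m assume m: "m \<in> {m. \<forall>j\<in>S. m!j = (j \<in> {i})}"
    then have "S \<inter> {j. m!j} = {i}" using i by auto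
    then have "?g m = flip_set {i} x" using crossover_mask_eq_flip_set[OF len, of m] S(1) by simp
    moreover have "onemax (flip_set {i} x) = onemax x + 1"
      using onemax_flip_set_zeros[of "{i}" x] i Ssub by (auto simp: zeros_def)
    ultimately show "m \<in> ?g -` {z. onemax x + 1 \<le> onemax z}" by simp
  qed
  have "?p * exp (-4) \<le> ?p ^ 1 * (1 - ?p) ^ card (S - {i})"
    using pow lam by (simp add: divide_right_mono)
  also have "\<dots> = measure_pmf.prob ?R {m. \<forall>j\<in>S. m!j = (j \<in> {i})}"
    using prob_replicate_bernoulli_pattern[OF p01, of S "length x" "{i}"] Ssub i by simp
  also have "\<dots> \<le> measure_pmf.prob ?R (?g -` {z. onemax x + 1 \<le> onemax z})"
    by (rule measure_pmf.finite_measure_mono[OF sub]) simp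
  also have "\<dots> = measure_pmf.prob (crossover ?p x x') {z. onemax x + 1 \<le> onemax z}"
    by (simp add: crossover_eq_map_mask[OF len])
  finally show ?thesis by simp
qed

lemma prob_crossover_phase_improves_ge:
  assumes lam: "2 \<le> lam" and len: "length x' = length x"
    and S: "S = {i. i < length x \<and> x'!i \<noteq> x!i}" "card S \<le> 2 * lam"
    and i: "i \<in> S" "\<not> x!i"
  shows "crossover_const \<le> measure_pmf.prob (bind_pmf (replicate_pmf lam (crossover (1 / real lam) x x'))
     (\<lambda>zs. let y = best_first zs in return_pmf (if onemax x \<le> onemax y then y else x)))
     {y. onemax x + 1 \<le> onemax y}"
proof -
  let ?Q = "measure_pmf.prob (crossover (1 / real lam) x x') {z. onemax x + 1 \<le> onemax z}"
  have "exp (-4) \<le> real lam * ?Q"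
    using prob_crossover_improves_ge[OF assms] lam by (simp add: field_simps)
  then have "crossover_const \<le> real lam * ?Q / (1 + real lam * ?Q)"
    unfolding crossover_const_def by (rule divide_one_plus_mono[rotated]) simp
  also have "\<dots> \<le> 1 - (1 - ?Q) ^ lam"
    by (rule one_minus_power_ge) auto
  finally show ?thesis
    using prob_elitist_best_ge[where M = "crossover (1 / real lam) x x'" and x = x and k = 1 and lam = lam]
    by linarith
qed

lemma prob_mut_ell_misses_zeros:
  assumes len: "length x = n" and l: "l \<le> n"
  shows "measure_pmf.prob (mut_ell l x) {z. \<not> (onemax x + 2 \<le> onemax z + l)}
     \<le> (1 - real (card (zeros x)) / real n) ^ l"
proof -
  let ?U = "subsets_card n l"
  let ?d = "card (zeros x)"
  have zs: "zeros x \<subseteq> {..<n}" using len by (auto simp: zeros_def)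
  have "measure_pmf.prob (mut_ell l x) {z. \<not> (onemax x + 2 \<le> onemax z + l)}
      = measure_pmf.prob (pmf_of_set ?U)
          ((\<lambda>S. flip_set S x) -` {z. \<not> (onemax x + 2 \<le> onemax z + l)})"
    by (simp add: mut_ell_def subsets_card_def len)
  also have "\<dots> \<le> measure_pmf.prob (pmf_of_set ?U) {S. S \<inter> zeros x = {}}"
  proof (rule measure_pmf.finite_measure_mono_AE)
    show "AE S in measure_pmf (pmf_of_set ?U).
        S \<in> (\<lambda>S. flip_set S x) -` {z. \<not> (onemax x + 2 \<le> onemax z + l)} \<longrightarrow> S \<in> {S. S \<inter> zeros x = {}}"
      using finite_subsets_card subsets_card_nonempty[OF l] onemax_flip_set_gain_iff len
      by (auto simp: AE_measure_pmf_iff subsets_card_def)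
  qed simp
  also have "\<dots> = card (?U \<inter> {S. S \<inter> zeros x = {}}) / card ?U"
    using finite_subsets_card subsets_card_nonempty[OF l] by (simp add: measure_pmf_of_set)
  also have "?U \<inter> {S. S \<inter> zeros x = {}} = {S. S \<subseteq> {..<n} - zeros x \<and> card S = l}"
    by (auto simp: subsets_card_def)
  also have "card \<dots> = (n - ?d) choose l"
    using n_subsets[of "{..<n} - zeros x" l] zs by (simp add: card_Diff_subset finite_subset)
  also have "card ?U = n choose l" unfolding subsets_card_def using n_subsets[of "{..<n}" l] by simp
  also have "real ((n - ?d) choose l) / real (n choose l) \<le> (1 - real ?d / real n) ^ l"
    using choose_diff_le_power[OF card_mono[OF _ zs, simplified] l] l by (simp add: field_simps)
  finally show ?thesis .
qed

definition ga_step_given_ell :: "nat \<Rightarrow> bool list \<Rightarrow> nat \<Rightarrow> bool list pmf" where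
  "ga_step_given_ell lam x l = bind_pmf (replicate_pmf lam (mut_ell l x)) (\<lambda>ys.
     bind_pmf (best_uniform ys) (\<lambda>x'.
     bind_pmf (replicate_pmf lam (crossover (1 / real lam) x x')) (\<lambda>zs.
       let y = best_first zs in return_pmf (if onemax x \<le> onemax y then y else x))))"

lemma ga_step_eq_bind_binomial:
  "ga_step n lam x = bind_pmf (binomial_pmf n (real lam / real n)) (ga_step_given_ell lam x)"
  by (simp add: ga_step_def ga_step_given_ell_def[abs_def] sample_list_eq_replicate_pmf)

lemma set_pmf_binomial_subset: "0 \<le> p \<Longrightarrow> p \<le> 1 \<Longrightarrow> set_pmf (binomial_pmf n p) \<subseteq> {..n}"
  by (subst set_pmf_binomial_eq) (auto split: if_splits)

text \<open>The best of mutants that contain a gaining mutant again flips a zero-bit, since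
  \<open>onemax x' - onemax x \<ge> 2 - \<ell>\<close> characterises these mutants.\<close>

lemma prob_ga_after_good_mutant_ge:
  assumes lam: "2 \<le> lam" and len: "length x = n" and l: "l \<le> n" "l \<le> 2 * lam"
    and ys: "ys \<in> set_pmf (replicate_pmf lam (mut_ell l x))"
    and good: "\<exists>y\<in>set ys. onemax x + 2 \<le> onemax y + l"
  shows "crossover_const \<le> measure_pmf.prob (bind_pmf (best_uniform ys) (\<lambda>x'.
     bind_pmf (replicate_pmf lam (crossover (1 / real lam) x x')) (\<lambda>zs.
       let y = best_first zs in return_pmf (if onemax x \<le> onemax y then y else x))))
     {y. onemax x + 1 \<le> onemax y}"
proof -
  obtain y where y: "y \<in> set ys" "onemax x + 2 \<le> onemax y + l" using good by blast
  have ne: "ys \<noteq> []" using y by auto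
  have ys_mut: "set ys \<subseteq> (\<lambda>S. flip_set S x) ` subsets_card n l"
    using ys set_mut_ell[of l x] l len by (auto simp: set_replicate_pmf)
  have "crossover_const * measure_pmf.prob (best_uniform ys) {x'. True}
      \<le> measure_pmf.prob (bind_pmf (best_uniform ys) (\<lambda>x'.
     bind_pmf (replicate_pmf lam (crossover (1 / real lam) x x')) (\<lambda>zs.
       let y = best_first zs in return_pmf (if onemax x \<le> onemax y then y else x))))
     {y. onemax x + 1 \<le> onemax y}"
  proof (rule prob_bind_pmf_ge)
    fix x' assume x': "x' \<in> set_pmf (best_uniform ys)"
    obtain S where S: "S \<in> subsets_card n l" "x' = flip_set S x"
      using best_uniform_mem[OF ne x'] ys_mut by auto
    have Ssub: "S \<subseteq> {..<length x}" "card S = l" using S len by (auto simp: subsets_card_def)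
    have "onemax x + 2 \<le> onemax x' + l" using y onemax_le_best_uniform[OF ne x'] by fastforce
    then obtain i where i: "i \<in> S" "\<not> x!i"
      using onemax_flip_set_gain_iff[OF Ssub] S by (auto simp: zeros_def)
    show "crossover_const \<le> measure_pmf.prob (bind_pmf (replicate_pmf lam (crossover (1 / real lam) x x'))
      (\<lambda>zs. let y = best_first zs in return_pmf (if onemax x \<le> onemax y then y else x)))
      {y. onemax x + 1 \<le> onemax y}"
      by (rule prob_crossover_phase_improves_ge[OF lam _ _ _ i])
         (use S Ssub l flip_set_changed_positions[OF Ssub(1)] in auto)
  qed (use crossover_const_pos in auto)
  then show ?thesis by simp
qed

lemma prob_ga_step_given_ell_improves_ge:
  assumes lam: "2 \<le> lam" and len: "length x = n"
    and l: "l \<le> n" "real lam / 2 \<le> real l" "l \<le> 2 * lam"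
  shows "crossover_const * (1 - (1 - real (card (zeros x)) / real n) ^ (l * lam))
     \<le> measure_pmf.prob (ga_step_given_ell lam x l) {y. onemax x + 1 \<le> onemax y}"
proof -
  let ?good = "\<lambda>z. onemax x + 2 \<le> onemax z + l"
  let ?M = "mut_ell l x"
  let ?q = "real (card (zeros x)) / real n"
  have "measure_pmf.prob ?M {y. \<not> ?good y} \<le> (1 - ?q) ^ l"
    by (rule prob_mut_ell_misses_zeros[OF len l(1)])
  moreover have "1 - measure_pmf.prob ?M {y. ?good y} = measure_pmf.prob ?M {y. \<not> ?good y}"
    by (subst measure_pmf.prob_compl[symmetric]) (auto intro!: arg_cong[where f="measure_pmf.prob _"])
  ultimately have "(1 - measure_pmf.prob ?M {y. ?good y}) ^ lam \<le> ((1 - ?q) ^ l) ^ lam"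
    by (simp add: power_mono)
  then have "(1 - measure_pmf.prob ?M {y. ?good y}) ^ lam \<le> (1 - ?q) ^ (l * lam)"
    by (simp add: power_mult)
  then have "crossover_const * (1 - (1 - ?q) ^ (l * lam))
      \<le> crossover_const * measure_pmf.prob (replicate_pmf lam ?M) {ys. \<exists>y\<in>set ys. ?good y}"
    using crossover_const_pos by (simp add: prob_replicate_pmf_ex)
  also have "\<dots> \<le> measure_pmf.prob (ga_step_given_ell lam x l) {y. onemax x + 1 \<le> onemax y}"
    unfolding ga_step_given_ell_def
    by (rule prob_bind_pmf_ge)
       (use prob_ga_after_good_mutant_ge[OF lam len l(1,3)] crossover_const_pos in auto)
  finally show ?thesis .
qed

lemma prob_ga_step_improves_ge:
  assumes lam: "8 \<le> lam" "lam \<le> n" and len: "length x = n"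
  defines "X \<equiv> real lam ^ 2 * real (card (zeros x)) / (2 * real n)"
  shows "crossover_const * (X / (1 + X)) / 2
    \<le> measure_pmf.prob (ga_step n lam x) {y. onemax x + 1 \<le> onemax y}"
proof -
  let ?q = "real (card (zeros x)) / real n"
  let ?B = "binomial_pmf n (real lam / real n)"
  have zs: "zeros x \<subseteq> {..<n}" using len by (auto simp: zeros_def)
  have q01: "0 \<le> ?q" "?q \<le> 1" using card_mono[OF _ zs] by (cases "n = 0", auto simp: field_simps)+
  have X0: "0 \<le> X" unfolding X_def by simp
  have "crossover_const * (X / (1 + X)) * (1 / 2)
      \<le> crossover_const * (X / (1 + X)) * measure_pmf.prob ?B {l. real lam / 2 \<le> real l \<and> l \<le> 2 * lam}"
    using binomial_pmf_concentration[OF lam] crossover_const_pos X0 by (intro mult_left_mono) auto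
  also have "\<dots> \<le> measure_pmf.prob (ga_step n lam x) {y. onemax x + 1 \<le> onemax y}"
    unfolding ga_step_eq_bind_binomial
  proof (rule prob_bind_pmf_ge)
    fix l assume l: "l \<in> set_pmf ?B" "real lam / 2 \<le> real l \<and> l \<le> 2 * lam"
    have ln: "l \<le> n" using l(1) set_pmf_binomial_subset[of "real lam / real n" n] lam by auto
    have "X \<le> real (l * lam) * ?q"
    proof -
      have "real lam * real lam \<le> (2 * real l) * real lam"
        using l(2) by (intro mult_right_mono) auto
      then have "real lam ^ 2 / 2 \<le> real l * real lam" by (simp add: power2_eq_square)
      then have "real lam ^ 2 / 2 * ?q \<le> real l * real lam * ?q" by (rule mult_right_mono) (use q01 in auto)
      then show ?thesis unfolding X_def by (simp add: field_simps)
    qed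
    then have "X / (1 + X) \<le> 1 - (1 - ?q) ^ (l * lam)"
      using divide_one_plus_mono[OF X0] one_minus_power_ge[OF q01, of "l * lam"] by force
    then have "crossover_const * (X / (1 + X))
        \<le> crossover_const * (1 - (1 - ?q) ^ (l * lam))"
      using crossover_const_pos by (intro mult_left_mono) auto
    also have "\<dots> \<le> measure_pmf.prob (ga_step_given_ell lam x l) {y. onemax x + 1 \<le> onemax y}"
      by (rule prob_ga_step_given_ell_improves_ge) (use lam len ln l(2) in auto)
    finally show "crossover_const * (X / (1 + X))
        \<le> measure_pmf.prob (ga_step_given_ell lam x l) {y. onemax x + 1 \<le> onemax y}" .
  qed (use crossover_const_pos X0 in auto)
  finally show ?thesis by simp
qed

lemma ga_step_support:
  assumes lam: "1 \<le> lam" "lam \<le> n" and len: "length x = n" and y: "y \<in> set_pmf (ga_step n lam x)"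
  shows "length y = n \<and> onemax x \<le> onemax y"
proof -
  obtain l ys x' zs where l: "l \<in> set_pmf (binomial_pmf n (real lam / real n))"
    and ys: "ys \<in> set_pmf (replicate_pmf lam (mut_ell l x))"
    and x': "x' \<in> set_pmf (best_uniform ys)"
    and zs: "zs \<in> set_pmf (replicate_pmf lam (crossover (1 / real lam) x x'))"
    and y_eq: "y = (if onemax x \<le> onemax (best_first zs) then best_first zs else x)"
    using y unfolding ga_step_eq_bind_binomial ga_step_given_ell_def by (auto simp: Let_def)
  have "l \<le> n" using l set_pmf_binomial_subset[of "real lam / real n" n] lam by auto
  then have set_mut: "set_pmf (mut_ell l x) = (\<lambda>S. flip_set S x) ` subsets_card n l"
    using set_mut_ell[of l x] len by simp
  have ys_ne: "ys \<noteq> []" and "set ys \<subseteq> set_pmf (mut_ell l x)"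
    using ys lam by (auto simp: set_replicate_pmf)
  then have len_x': "length x' = length x" using best_uniform_mem[OF ys_ne x'] set_mut by auto
  have zs_ne: "zs \<noteq> []" and "set zs \<subseteq> set_pmf (crossover (1 / real lam) x x')"
    using zs lam by (auto simp: set_replicate_pmf)
  then have "length (best_first zs) = length x"
    using best_first_mem[OF zs_ne] length_crossover[OF len_x'] by blast
  then show ?thesis using y_eq len by auto
qed

definition ga_weight :: "nat \<Rightarrow> nat \<Rightarrow> nat \<Rightarrow> real" where
  "ga_weight n lam j = 4 / crossover_const * (real lam + 2 * real n / (real lam * real j))"

lemma ga_weight_nonneg: "0 \<le> ga_weight n lam j"
  using crossover_const_pos by (simp add: ga_weight_def)

lemma ga_step_leaves_level:
  assumes "8 \<le> lam" "lam \<le> n" "length x = n" "0 < n - onemax x"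
  shows "real (2 * lam)
    \<le> ga_weight n lam (n - onemax x) * measure_pmf.prob (ga_step n lam x) {y. onemax x + 1 \<le> onemax y}"
proof -
  let ?d = "n - onemax x"
  define X where "X = real lam ^ 2 * real ?d / (2 * real n)"
  have pos: "0 < real n" "0 < real lam" "0 < real ?d" using assms by auto
  then have X0: "0 < X" by (simp add: X_def)
  have "2 * real n / (real lam * real ?d) = real lam / X"
    using pos by (simp add: X_def field_simps power2_eq_square)
  then have w: "ga_weight n lam ?d = 4 / crossover_const * (real lam + real lam / X)"
    by (simp add: ga_weight_def)
  have cancel: "4 / crossover_const * A * (crossover_const * B / 2) = 2 * (A * B)" for A B :: real
    using crossover_const_pos by (simp add: field_simps)
  have "ga_weight n lam ?d * (crossover_const * (X / (1 + X)) / 2)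
      = 2 * ((real lam + real lam / X) * (X / (1 + X)))"
    by (simp only: w cancel)
  also have "\<dots> = real (2 * lam)" by (simp only: divide_one_plus_cancel[OF X0])
  finally have eq: "ga_weight n lam ?d * (crossover_const * (X / (1 + X)) / 2) = real (2 * lam)" .
  have "crossover_const * (X / (1 + X)) / 2
      \<le> measure_pmf.prob (ga_step n lam x) {y. onemax x + 1 \<le> onemax y}"
    using prob_ga_step_improves_ge[OF assms(1-3)] card_zeros[of x] assms(3) by (simp add: X_def)
  then show ?thesis
    using mult_left_mono[OF _ ga_weight_nonneg] eq by metis
qed

section \<open>Fitness levels as a potential\<close>

lemma total_cost_le_potential:
  fixes K :: "'s \<Rightarrow> 's pmf" and c \<Phi> :: "'s \<Rightarrow> ennreal"
  assumes init: "set_pmf M0 \<subseteq> I" and closed: "\<And>s. s \<in> I \<Longrightarrow> set_pmf (K s) \<subseteq> I"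
    and drift: "\<And>s. s \<in> I \<Longrightarrow> c s + (\<integral>\<^sup>+s'. \<Phi> s' \<partial>K s) \<le> \<Phi> s"
  shows "(\<Sum>t. \<integral>\<^sup>+s. c s \<partial>((\<lambda>M. bind_pmf M K) ^^ t) M0) \<le> (\<integral>\<^sup>+s. \<Phi> s \<partial>M0)"
proof -
  define M where "M t = ((\<lambda>M. bind_pmf M K) ^^ t) M0" for t
  have M_Suc: "M (Suc t) = bind_pmf (M t) K" for t by (simp add: M_def)
  have M_I: "set_pmf (M t) \<subseteq> I" for t
    by (induction t) (use init closed in \<open>auto simp: M_def\<close>)
  have partial: "(\<Sum>t<T. \<integral>\<^sup>+s. c s \<partial>M t) + (\<integral>\<^sup>+s. \<Phi> s \<partial>M T) \<le> (\<integral>\<^sup>+s. \<Phi> s \<partial>M0)" for T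
  proof (induction T)
    case 0 then show ?case by (simp add: M_def)
  next
    case (Suc T)
    have "(\<integral>\<^sup>+s. c s \<partial>M T) + (\<integral>\<^sup>+s. \<Phi> s \<partial>M (Suc T)) = (\<integral>\<^sup>+s. (c s + (\<integral>\<^sup>+s'. \<Phi> s' \<partial>K s)) \<partial>M T)"
      by (simp add: M_Suc nn_integral_add)
    also have "\<dots> \<le> (\<integral>\<^sup>+s. \<Phi> s \<partial>M T)"
      by (rule nn_integral_mono_AE) (use M_I drift in \<open>auto simp: AE_measure_pmf_iff\<close>)
    finally have "(\<Sum>t<Suc T. \<integral>\<^sup>+s. c s \<partial>M t) + (\<integral>\<^sup>+s. \<Phi> s \<partial>M (Suc T))
        \<le> (\<Sum>t<T. \<integral>\<^sup>+s. c s \<partial>M t) + (\<integral>\<^sup>+s. \<Phi> s \<partial>M T)"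
      by (simp add: add.assoc add_left_mono)
    then show ?case using Suc.IH by (rule order_trans)
  qed
  have "(\<Sum>t<T. \<integral>\<^sup>+s. c s \<partial>M t) \<le> (\<integral>\<^sup>+s. \<Phi> s \<partial>M0)" for T
    using partial[of T] by (rule order_trans[rotated]) simp
  then show ?thesis
    unfolding suminf_eq_SUP M_def[symmetric] by (rule SUP_least)
qed

definition level_sum :: "(nat \<Rightarrow> real) \<Rightarrow> nat \<Rightarrow> real" where
  "level_sum w d = (\<Sum>j\<in>{1..d}. w j)"

lemma level_sum_Suc: "level_sum w (Suc d) = level_sum w d + w (Suc d)"
  by (simp add: level_sum_def)

lemma level_sum_mono: "(\<And>j. 0 \<le> w j) \<Longrightarrow> d' \<le> d \<Longrightarrow> level_sum w d' \<le> level_sum w d"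
  unfolding level_sum_def by (rule sum_mono2) auto

lemma level_sum_nonneg: "(\<And>j. 0 \<le> w j) \<Longrightarrow> 0 \<le> level_sum w d"
  unfolding level_sum_def by (rule sum_nonneg) auto

lemma level_sum_diff_ge:
  assumes antimono: "\<And>i j. i \<le> j \<Longrightarrow> w j \<le> w i" and le: "d' \<le> d"
  shows "level_sum w d' + real (d - d') * w d \<le> level_sum w d"
  using le
proof (induction d rule: dec_induct)
  case base then show ?case by simp
next
  case (step m)
  have "real (Suc m - d') * w (Suc m) = real (m - d') * w (Suc m) + w (Suc m)"
    using step.hyps by (simp add: Suc_diff_le algebra_simps)
  moreover have "real (m - d') * w (Suc m) \<le> real (m - d') * w m"
    using antimono[of m "Suc m"] by (intro mult_left_mono) auto
  ultimately show ?case using step.IH by (simp add: level_sum_Suc)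
qed

definition potential :: "nat \<Rightarrow> nat \<Rightarrow> (nat \<Rightarrow> real) \<Rightarrow> (nat \<Rightarrow> real) \<Rightarrow> bool \<times> bool list \<Rightarrow> real" where
  "potential n D w v s =
     (if fst s then level_sum v (n - onemax (snd s))
      else level_sum v D + level_sum w (n - onemax (snd s)))"

definition consistent_states :: "nat \<Rightarrow> nat \<Rightarrow> (bool \<times> bool list) set" where
  "consistent_states n D = {s. length (snd s) = n \<and> fst s = (n - onemax (snd s) \<le> D)}"

lemma init_state_consistent: "set_pmf (init_state n D) \<subseteq> consistent_states n D"
proof -
  have "finite {x :: bool list. length x = n}"
    using finite_lists_length_eq[of "UNIV::bool set" n] by simp
  moreover have "{x :: bool list. length x = n} \<noteq> {}" by (auto intro: exI[of _ "replicate n True"])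
  ultimately show ?thesis by (auto simp: init_state_def consistent_states_def)
qed

context
  fixes n lam1 D lam2 :: nat and w v :: "nat \<Rightarrow> real"
  assumes lam: "1 \<le> lam1" "1 \<le> lam2" "lam2 \<le> n"
    and w_nonneg: "\<And>j. 0 \<le> w j" and w_antimono: "\<And>i j. i \<le> j \<Longrightarrow> w j \<le> w i"
    and v_nonneg: "\<And>j. 0 \<le> v j"
    and ea_progress: "\<And>x. length x = n \<Longrightarrow> D < n - onemax x \<Longrightarrow>
        \<exists>k\<ge>1. real lam1
          \<le> w (n - onemax x) * real k * measure_pmf.prob (ea_step n lam1 x) {y. onemax x + k \<le> onemax y}"
    and ga_progress: "\<And>x. length x = n \<Longrightarrow> 0 < n - onemax x \<Longrightarrow> n - onemax x \<le> D \<Longrightarrow>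
        real (2 * lam2) \<le> v (n - onemax x) * measure_pmf.prob (ga_step n lam2 x) {y. onemax x + 1 \<le> onemax y}"
begin

abbreviation "\<Phi> \<equiv> potential n D w v"

lemma potential_nonneg: "0 \<le> \<Phi> s"
  using level_sum_nonneg w_nonneg v_nonneg by (auto simp: potential_def intro: add_nonneg_nonneg)

lemma potential_bounded: "\<bar>\<Phi> s\<bar> \<le> level_sum v n + level_sum v D + level_sum w n"
proof -
  have "level_sum v (n - onemax (snd s)) \<le> level_sum v n"
    "level_sum w (n - onemax (snd s)) \<le> level_sum w n"
    using level_sum_mono w_nonneg v_nonneg by auto
  moreover have "0 \<le> level_sum v D" "0 \<le> level_sum v n" "0 \<le> level_sum w (n - onemax (snd s))"
    using level_sum_nonneg w_nonneg v_nonneg by auto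
  ultimately show ?thesis using potential_nonneg[of s] by (auto simp: potential_def)
qed

lemma potential_le_initial:
  assumes "s \<in> consistent_states n D"
  shows "\<Phi> s \<le> level_sum v D + level_sum w n"
proof (cases "fst s")
  case True
  then have "level_sum v (n - onemax (snd s)) \<le> level_sum v D"
    using assms v_nonneg by (intro level_sum_mono) (auto simp: consistent_states_def)
  then show ?thesis using True level_sum_nonneg[of w n] w_nonneg by (simp add: potential_def)
next
  case False
  have "level_sum w (n - onemax (snd s)) \<le> level_sum w n" by (rule level_sum_mono) (use w_nonneg in auto)
  then show ?thesis using False by (simp add: potential_def)
qed

lemma combined_step_consistent:
  assumes "s \<in> consistent_states n D"
  shows "set_pmf (combined_step n lam1 D lam2 s) \<subseteq> consistent_states n D"
proof
  fix s' assume s': "s' \<in> set_pmf (combined_step n lam1 D lam2 s)"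
  obtain b x where s: "s = (b, x)" by (cases s)
  have len: "length x = n" and b: "b = (n - onemax x \<le> D)"
    using assms s by (auto simp: consistent_states_def)
  show "s' \<in> consistent_states n D"
  proof (cases b)
    case True
    then obtain y where y: "y \<in> set_pmf (ga_step n lam2 x)" "s' = (True, y)"
      using s' s by (auto simp: combined_step_def)
    have "length y = n \<and> onemax x \<le> onemax y" using ga_step_support[OF lam(2,3) len y(1)] .
    then show ?thesis using y b True by (auto simp: consistent_states_def)
  next
    case False
    then obtain y where y: "y \<in> set_pmf (ea_step n lam1 x)" "s' = (n - onemax y \<le> D, y)"
      using s' s by (auto simp: combined_step_def)
    then show ?thesis using ea_step_support[OF lam(1) y(1)] len by (auto simp: consistent_states_def)
  qed
qed

lemma potential_drift_at_optimum:
  assumes len: "length x = n" and opt: "onemax x = n"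
  shows "real (iter_cost n lam1 lam2 (True, x))
    + measure_pmf.expectation (combined_step n lam1 D lam2 (True, x)) \<Phi> \<le> \<Phi> (True, x)"
proof -
  have "measure_pmf.expectation (ga_step n lam2 x) (\<lambda>y. \<Phi> (True, y))
      \<le> 0 - 0 * measure_pmf.prob (ga_step n lam2 x) {}"
  proof (rule expectation_le_minus_indicator)
    fix y assume "y \<in> set_pmf (ga_step n lam2 x)"
    then have "n - onemax y = 0" using ga_step_support[OF lam(2,3) len] opt by fastforce
    then show "\<Phi> (True, y) \<le> 0 - 0 * indicator {} y" by (simp add: potential_def level_sum_def)
  qed (rule potential_bounded)
  moreover have "x = replicate n True"
    using onemax_eq_length_imp_replicate_True[of x] len opt by simp
  ultimately show ?thesis
    using opt by (simp add: combined_step_def iter_cost_def potential_def level_sum_def)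
qed

lemma potential_drift_ga:
  assumes len: "length x = n" and d: "0 < n - onemax x" "n - onemax x \<le> D"
  shows "real (iter_cost n lam1 lam2 (True, x))
    + measure_pmf.expectation (combined_step n lam1 D lam2 (True, x)) \<Phi> \<le> \<Phi> (True, x)"
proof -
  define d where "d = n - onemax x"
  have supp: "length y = n \<and> onemax x \<le> onemax y" if "y \<in> set_pmf (ga_step n lam2 x)" for y
    using ga_step_support[OF lam(2,3) len that] .
  have "measure_pmf.expectation (ga_step n lam2 x) (\<lambda>y. \<Phi> (True, y))
      \<le> level_sum v d - v d * measure_pmf.prob (ga_step n lam2 x) {y. onemax x + 1 \<le> onemax y}"
  proof (rule expectation_le_minus_indicator)
    fix y assume y: "y \<in> set_pmf (ga_step n lam2 x)"
    show "\<Phi> (True, y) \<le> level_sum v d - v d * indicator {y. onemax x + 1 \<le> onemax y} y"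
    proof (cases "onemax x + 1 \<le> onemax y")
      case True
      then have "level_sum v (n - onemax y) \<le> level_sum v (d - 1)"
        using v_nonneg by (intro level_sum_mono) (auto simp: d_def)
      moreover have "Suc (d - 1) = d" using d by (simp add: d_def)
      then have "level_sum v d = level_sum v (d - 1) + v d"
        using level_sum_Suc[of v "d - 1"] by simp
      ultimately show ?thesis using True by (simp add: potential_def)
    next
      case False
      have "level_sum v (n - onemax y) \<le> level_sum v d"
        using v_nonneg supp[OF y] by (intro level_sum_mono) (auto simp: d_def)
      then show ?thesis using False by (simp add: potential_def)
    qed
  qed (rule potential_bounded)
  moreover have "x \<noteq> replicate n True" using d onemax_replicate_True[of n] by auto
  ultimately show ?thesis
    using ga_progress[OF len d] by (simp add: combined_step_def iter_cost_def potential_def d_def)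
qed

text \<open>In the EA phase the potential drops by \<open>w d\<close> per level gained; switching to the GA never
  increases it, because the EA-phase potential already contains the whole GA budget \<open>level_sum v D\<close>.\<close>

lemma potential_drift_ea:
  assumes len: "length x = n" and d: "D < n - onemax x"
  shows "real (iter_cost n lam1 lam2 (False, x))
    + measure_pmf.expectation (combined_step n lam1 D lam2 (False, x)) \<Phi> \<le> \<Phi> (False, x)"
proof -
  define d where "d = n - onemax x"
  obtain k where k: "k \<ge> 1"
    "real lam1 \<le> w d * real k * measure_pmf.prob (ea_step n lam1 x) {y. onemax x + k \<le> onemax y}"
    using ea_progress[OF len d] by (auto simp: d_def)
  have "measure_pmf.expectation (ea_step n lam1 x) (\<lambda>y. \<Phi> (n - onemax y \<le> D, y))
      \<le> (level_sum v D + level_sum w d)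
        - (w d * real k) * measure_pmf.prob (ea_step n lam1 x) {y. onemax x + k \<le> onemax y}"
  proof (rule expectation_le_minus_indicator)
    fix y assume y: "y \<in> set_pmf (ea_step n lam1 x)"
    define d' where "d' = n - onemax y"
    have supp: "length y = n" "onemax x \<le> onemax y" using ea_step_support[OF lam(1) y] len by auto
    have "\<Phi> (n - onemax y \<le> D, y) \<le> level_sum v D + level_sum w d'"
      using level_sum_mono[of v d' D, OF v_nonneg] level_sum_nonneg[of w d', OF w_nonneg]
      by (auto simp: potential_def d'_def)
    moreover have "level_sum w d' + real (d - d') * w d \<le> level_sum w d"
      using supp by (intro level_sum_diff_ge w_antimono) (auto simp: d_def d'_def)
    moreover have "real k * w d \<le> real (d - d') * w d" if "onemax x + k \<le> onemax y"
      using that w_nonneg[of d] onemax_le_length[of y] supp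
      by (intro mult_right_mono) (auto simp: d_def d'_def)
    moreover have "0 \<le> real (d - d') * w d" using w_nonneg[of d] by simp
    ultimately show "\<Phi> (n - onemax y \<le> D, y)
        \<le> (level_sum v D + level_sum w d) - (w d * real k) * indicator {y. onemax x + k \<le> onemax y} y"
      by (cases "onemax x + k \<le> onemax y") (simp_all add: algebra_simps)
  qed (rule potential_bounded)
  moreover have "x \<noteq> replicate n True" using d onemax_replicate_True[of n] by auto
  ultimately show ?thesis
    using d k(2) by (simp add: combined_step_def iter_cost_def potential_def d_def algebra_simps)
qed

lemma potential_drift:
  assumes "s \<in> consistent_states n D"
  shows "ennreal (real (iter_cost n lam1 lam2 s)) + (\<integral>\<^sup>+s'. ennreal (\<Phi> s') \<partial>combined_step n lam1 D lam2 s)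
    \<le> ennreal (\<Phi> s)"
proof -
  obtain b x where s: "s = (b, x)" by (cases s)
  have len: "length x = n" and b: "b = (n - onemax x \<le> D)"
    using assms s by (auto simp: consistent_states_def)
  consider (optimum) "b" "onemax x = n" | (ga) "b" "0 < n - onemax x" "n - onemax x \<le> D"
    | (ea) "\<not> b" "D < n - onemax x"
    using onemax_le_length[of x] len b by force
  then have real_drift:
    "real (iter_cost n lam1 lam2 s) + measure_pmf.expectation (combined_step n lam1 D lam2 s) \<Phi> \<le> \<Phi> s"
  proof cases
    case optimum
    then show ?thesis unfolding s using potential_drift_at_optimum[OF len] by simp
  next
    case ga
    then show ?thesis unfolding s using potential_drift_ga[OF len] by simp
  next
    case ea
    then show ?thesis unfolding s using potential_drift_ea[OF len] by simp
  qed
  have "integrable (measure_pmf (combined_step n lam1 D lam2 s)) \<Phi>"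
    by (rule measure_pmf.integrable_const_bound[where B="level_sum v n + level_sum v D + level_sum w n"])
       (auto intro: potential_bounded)
  then have "(\<integral>\<^sup>+s'. ennreal (\<Phi> s') \<partial>combined_step n lam1 D lam2 s)
      = ennreal (measure_pmf.expectation (combined_step n lam1 D lam2 s) \<Phi>)"
    by (rule nn_integral_eq_integral) (auto intro: potential_nonneg)
  moreover have "0 \<le> measure_pmf.expectation (combined_step n lam1 D lam2 s) \<Phi>"
    by (rule Bochner_Integration.integral_nonneg) (rule potential_nonneg)
  ultimately have "ennreal (real (iter_cost n lam1 lam2 s)) + (\<integral>\<^sup>+s'. ennreal (\<Phi> s') \<partial>combined_step n lam1 D lam2 s)
      = ennreal (real (iter_cost n lam1 lam2 s) + measure_pmf.expectation (combined_step n lam1 D lam2 s) \<Phi>)"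
    by (simp add: ennreal_plus)
  also have "\<dots> \<le> ennreal (\<Phi> s)" by (rule ennreal_leI[OF real_drift])
  finally show ?thesis .
qed

lemma expected_evals_le_level_sums:
  "expected_evals n lam1 D lam2 \<le> ennreal (1 + (level_sum v D + level_sum w n))"
proof -
  have "(\<Sum>t. \<integral>\<^sup>+s. ennreal (real (iter_cost n lam1 lam2 s)) \<partial>state_after n lam1 D lam2 t)
      \<le> (\<integral>\<^sup>+s. ennreal (\<Phi> s) \<partial>init_state n D)"
    unfolding state_after_def
    by (rule total_cost_le_potential[OF init_state_consistent combined_step_consistent potential_drift])
  also have "\<dots> \<le> (\<integral>\<^sup>+s. ennreal (level_sum v D + level_sum w n) \<partial>init_state n D)"
    using init_state_consistent[of n D] potential_le_initial
    by (intro nn_integral_mono_AE) (auto simp: AE_measure_pmf_iff intro!: ennreal_leI)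
  also have "\<dots> = ennreal (level_sum v D + level_sum w n)"
    by (simp add: measure_pmf.emeasure_space_1)
  finally have "expected_evals n lam1 D lam2 \<le> 1 + ennreal (level_sum v D + level_sum w n)"
    unfolding expected_evals_def by (rule add_left_mono)
  then show ?thesis
    using level_sum_nonneg w_nonneg v_nonneg by (simp add: ennreal_plus)
qed

end

section \<open>Level weights\<close>

text \<open>With \<open>jumps\<close> set, \<open>k\<close> levels are gained at once with probability at least \<open>1/2\<close>
  at distance \<open>j \<ge> n / k\<close>, which costs only \<open>2 \<lambda> / k\<close> per level.\<close>

definition ea_capped_weight :: "nat \<Rightarrow> nat \<Rightarrow> bool \<Rightarrow> nat \<Rightarrow> nat \<Rightarrow> real" where
  "ea_capped_weight n lam jumps k j =
     (if jumps \<and> n \<le> k * j then min (ea_weight n lam j) (2 * real lam / real k) else ea_weight n lam j)"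

text \<open>Levels up to \<open>D\<close> are never visited by the EA; they get the weight of level \<open>D + 1\<close>,
  which keeps the weights antitone.\<close>

definition ea_level_weight :: "nat \<Rightarrow> nat \<Rightarrow> nat \<Rightarrow> bool \<Rightarrow> nat \<Rightarrow> nat \<Rightarrow> real" where
  "ea_level_weight n lam D jumps k j = ea_capped_weight n lam jumps k (max j (Suc D))"

lemma ea_capped_weight_nonneg: "0 \<le> ea_capped_weight n lam jumps k j"
  by (simp add: ea_capped_weight_def ea_weight_nonneg)

lemma ea_capped_weight_antimono:
  assumes "1 \<le> i" "i \<le> j"
  shows "ea_capped_weight n lam jumps k j \<le> ea_capped_weight n lam jumps k i"
proof -
  have "k * i \<le> k * j" using assms by simp
  then have "jumps \<and> n \<le> k * i \<Longrightarrow> jumps \<and> n \<le> k * j" by linarith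
  then show ?thesis
    using ea_weight_antimono[OF assms, of n lam]
    by (auto simp: ea_capped_weight_def min_le_iff_disj)
qed

lemma ea_level_weight_nonneg: "0 \<le> ea_level_weight n lam D jumps k j"
  by (simp add: ea_level_weight_def ea_capped_weight_nonneg)

lemma ea_level_weight_antimono: "i \<le> j \<Longrightarrow> ea_level_weight n lam D jumps k j \<le> ea_level_weight n lam D jumps k i"
  unfolding ea_level_weight_def by (rule ea_capped_weight_antimono) auto

lemma ea_level_weight_progress:
  assumes n: "2 \<le> n" and lam: "1 \<le> lam"
    and jumps: "jumps \<longrightarrow> 1 \<le> k \<and> exp 2 * real k ^ (2 * k) \<le> real lam \<and> k * k \<le> n"
    and len: "length x = n" and d: "D < n - onemax x"
  shows "\<exists>k'\<ge>1. real lam \<le> ea_level_weight n lam D jumps k (n - onemax x) * real k'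
    * measure_pmf.prob (ea_step n lam x) {y. onemax x + k' \<le> onemax y}"
proof -
  let ?d = "n - onemax x"
  let ?P = "\<lambda>k'. measure_pmf.prob (ea_step n lam x) {y. onemax x + k' \<le> onemax y}"
  have weight: "ea_level_weight n lam D jumps k ?d = ea_capped_weight n lam jumps k ?d"
    using d by (simp add: ea_level_weight_def max_absorb1)
  have one_level: "real lam \<le> ea_weight n lam ?d * real 1 * ?P 1"
    using ea_step_leaves_level[OF n lam len] d by simp
  show ?thesis
  proof (cases "jumps \<and> n \<le> k * ?d \<and> 2 * real lam / real k < ea_weight n lam ?d")
    case True
    have k: "1 \<le> k" "exp 2 * real k ^ (2 * k) \<le> real lam" "k * k \<le> n" using jumps True by auto
    have "k * k \<le> k * ?d" using k(3) True by linarith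
    then have "k \<le> ?d" using k(1) by simp
    then have "1 / 2 \<le> ?P k" using ea_step_jump[OF n len k(1) _ _ k(2)] True by simp
    then have "real lam * 1 \<le> real lam * (2 * ?P k)" by (intro mult_left_mono) auto
    then have "real lam \<le> 2 * real lam / real k * real k * ?P k" using k(1) by simp
    then show ?thesis using True weight k(1) by (intro exI[of _ k]) (simp add: ea_capped_weight_def)
  next
    case False
    then have "ea_capped_weight n lam jumps k ?d = ea_weight n lam ?d"
      by (auto simp: ea_capped_weight_def)
    then show ?thesis using one_level weight by (intro exI[of _ 1]) simp
  qed
qed

lemma level_sum_ga_weight_le:
  assumes "0 < lam"
  shows "level_sum (ga_weight n lam) D
    \<le> 4 / crossover_const * (real D * real lam + 2 * real n / real lam * (1 + ln (real D)))"
proof -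
  have "level_sum (ga_weight n lam) D
      = 4 / crossover_const * (\<Sum>j\<in>{1..D}. real lam + 2 * real n / real lam * (1 / real j))"
    unfolding level_sum_def ga_weight_def by (simp add: sum_distrib_left field_simps)
  also have "\<dots> = 4 / crossover_const
      * (real D * real lam + 2 * real n / real lam * (\<Sum>j\<in>{1..D}. 1 / real j))"
    by (simp add: sum.distrib sum_distrib_left)
  also have "\<dots> \<le> 4 / crossover_const * (real D * real lam + 2 * real n / real lam * (1 + ln (real D)))"
    using harmonic_le_one_plus_ln[of D] assms crossover_const_pos
    by (intro mult_left_mono add_left_mono) auto
  finally show ?thesis .
qed

lemma sum_jump_costs_le:
  assumes "jumps \<longrightarrow> 1 \<le> k"
  shows "(\<Sum>j\<in>{1..n}. if jumps \<and> n \<le> k * j then 2 * real lam / real k else real lam)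
    \<le> (if jumps then 3 * real n * real lam / real k else real n * real lam)"
proof (cases jumps)
  case True
  then have k: "1 \<le> k" using assms by simp
  have "(\<Sum>j\<in>{1..n}. if jumps \<and> n \<le> k * j then 2 * real lam / real k else real lam)
      \<le> (\<Sum>j\<in>{1..n}. 2 * real lam / real k + real lam * (if k * j < n then 1 else 0))"
    by (rule sum_mono) (use True in auto)
  also have "\<dots> = real n * (2 * real lam / real k) + real lam * real (card {j\<in>{1..n}. k * j < n})"
  proof -
    have "card ({Suc 0..n} \<inter> {j. k * j < n}) = card {j. Suc 0 \<le> j \<and> j \<le> n \<and> k * j < n}"
      by (rule arg_cong[where f=card]) auto
    then show ?thesis by (simp add: sum.distrib sum_distrib_left[symmetric] sum.If_cases)
  qed
  also have "real lam * real (card {j\<in>{1..n}. k * j < n}) \<le> real lam * (real n / real k)"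
    using card_multiples_below[OF k, of n] by (intro mult_left_mono) auto
  finally show ?thesis using True by (simp add: field_simps)
qed simp

lemma level_sum_ea_level_weight_le:
  assumes D: "1 \<le> D" "D \<le> n" and jumps: "jumps \<longrightarrow> 1 \<le> k"
  shows "level_sum (ea_level_weight n lam D jumps k) n
    \<le> real lam * real D + exp 2 * real n + exp 2 * real n * (ln (real n) - ln (real D))
      + (if jumps then 3 * real n * real lam / real k else real n * real lam)"
proof -
  let ?w = "ea_level_weight n lam D jumps k"
  let ?g = "\<lambda>j. if jumps \<and> n \<le> k * j then 2 * real lam / real k else real lam"
  have "{1..n} = {1..D} \<union> {Suc D..n}" using D by auto
  then have "level_sum ?w n = (\<Sum>j\<in>{1..D}. ?w j) + (\<Sum>j\<in>{Suc D..n}. ?w j)"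
    unfolding level_sum_def by (simp add: sum.union_disjoint)
  moreover have "(\<Sum>j\<in>{1..D}. ?w j) \<le> real lam * real D + exp 2 * real n"
  proof -
    have "(\<Sum>j\<in>{1..D}. ?w j) = real D * ea_capped_weight n lam jumps k (Suc D)"
      by (simp add: ea_level_weight_def max_absorb2)
    also have "\<dots> \<le> real D * ea_weight n lam (Suc D)"
      by (intro mult_left_mono) (auto simp: ea_capped_weight_def)
    also have "\<dots> = real lam * real D + exp 2 * real n * (real D / real (Suc D))"
      by (simp add: ea_weight_def field_simps)
    also have "\<dots> \<le> real lam * real D + exp 2 * real n * 1"
      by (intro add_left_mono mult_left_mono) auto
    finally show ?thesis by simp
  qed
  moreover have "(\<Sum>j\<in>{Suc D..n}. ?w j) \<le> (\<Sum>j\<in>{Suc D..n}. exp 2 * real n * (1 / real j) + ?g j)"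
  proof (rule sum_mono)
    fix j assume "j \<in> {Suc D..n}"
    then have "?w j = ea_capped_weight n lam jumps k j" by (simp add: ea_level_weight_def max_absorb1)
    then show "?w j \<le> exp 2 * real n * (1 / real j) + ?g j"
      by (auto simp: ea_capped_weight_def ea_weight_def min_le_iff_disj)
  qed
  moreover have "(\<Sum>j\<in>{Suc D..n}. exp 2 * real n * (1 / real j) + ?g j)
      \<le> exp 2 * real n * (ln (real n) - ln (real D)) + (\<Sum>j\<in>{1..n}. ?g j)"
  proof -
    have "exp 2 * real n * (\<Sum>j\<in>{Suc D..n}. 1 / real j) \<le> exp 2 * real n * (ln (real n) - ln (real D))"
      using harmonic_tail_le_ln_diff[OF D] by (intro mult_left_mono) auto
    moreover have "(\<Sum>j\<in>{Suc D..n}. ?g j) \<le> (\<Sum>j\<in>{1..n}. ?g j)"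
      by (rule sum_mono2) auto
    ultimately show ?thesis by (simp add: sum.distrib sum_distrib_left)
  qed
  ultimately show ?thesis using sum_jump_costs_le[OF jumps, of n lam] by linarith
qed

lemma expected_evals_le_explicit:
  fixes n lam1 D lam2 k :: nat
  assumes n: "2 \<le> n" and lam1: "1 \<le> lam1" and lam2: "8 \<le> lam2" "lam2 \<le> n" and D: "1 \<le> D" "D \<le> n"
    and jumps: "jumps \<longrightarrow> 1 \<le> k \<and> exp 2 * real k ^ (2 * k) \<le> real lam1 \<and> k * k \<le> n"
  shows "expected_evals n lam1 D lam2 \<le> ennreal (1
      + 4 / crossover_const * (real D * real lam2 + 2 * real n / real lam2 * (1 + ln (real D)))
      + (real lam1 * real D + exp 2 * real n + exp 2 * real n * (ln (real n) - ln (real D))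
         + (if jumps then 3 * real n * real lam1 / real k else real n * real lam1)))"
proof -
  let ?w = "ea_level_weight n lam1 D jumps k"
  let ?v = "ga_weight n lam2"
  have "expected_evals n lam1 D lam2 \<le> ennreal (1 + (level_sum ?v D + level_sum ?w n))"
  proof (rule expected_evals_le_level_sums)
    show "\<exists>k'\<ge>1. real lam1
        \<le> ?w (n - onemax x) * real k' * measure_pmf.prob (ea_step n lam1 x) {y. onemax x + k' \<le> onemax y}"
      if "length x = n" "D < n - onemax x" for x
      by (rule ea_level_weight_progress[OF n lam1 jumps that])
    show "real (2 * lam2) \<le> ?v (n - onemax x) * measure_pmf.prob (ga_step n lam2 x) {y. onemax x + 1 \<le> onemax y}"
      if "length x = n" "0 < n - onemax x" "n - onemax x \<le> D" for x
      by (rule ga_step_leaves_level[OF lam2 that(1,2)])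
  qed (use lam1 lam2 ea_level_weight_nonneg ea_level_weight_antimono ga_weight_nonneg in auto)
  also have "\<dots> \<le> ennreal (1
      + 4 / crossover_const * (real D * real lam2 + 2 * real n / real lam2 * (1 + ln (real D)))
      + (real lam1 * real D + exp 2 * real n + exp 2 * real n * (ln (real n) - ln (real D))
         + (if jumps then 3 * real n * real lam1 / real k else real n * real lam1)))"
    using level_sum_ga_weight_le[of lam2 n D] level_sum_ea_level_weight_le[OF D, of jumps k lam1] lam2 jumps
    by (intro ennreal_leI) auto
  finally show ?thesis .
qed

section \<open>Asymptotics\<close>

lemma exp_two_mult_power_le:
  fixes k :: nat and L :: real
  assumes k: "1 \<le> k" "real k \<le> L / (8 * ln L)" and L: "1 \<le> L" "1 \<le> ln L"
  shows "exp 2 * real k ^ (2 * k) \<le> exp (2 + L / 4)"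
proof -
  have L_pos: "0 < L" using L by simp
  have kpos: "0 < real k" using k by simp
  have lnL_pos: "0 < ln L" using L by linarith
  then have "L / (8 * ln L) \<le> L / 1" using L by (intro divide_left_mono) auto
  then have "ln (real k) \<le> ln L" using k kpos by simp
  moreover have "0 \<le> ln (real k)" using k by simp
  ultimately have "real k * ln (real k) \<le> L / (8 * ln L) * ln L"
    using k(2) kpos by (intro mult_mono) auto
  also have "\<dots> = L / 8" using lnL_pos by simp
  finally have "2 * real k * ln (real k) \<le> L / 4" by simp
  moreover have "real k ^ (2 * k) = exp (real (2 * k) * ln (real k))"
    using kpos by (simp add: powr_realpow[symmetric] powr_def)
  ultimately show ?thesis by (simp add: exp_add[symmetric])
qed

text \<open>The jump length \<open>k = \<lfloor>\<lambda>\<^sub>1 / (B ln ln n)\<rfloor>\<close> is at most \<open>L\<^sub>3 / (8 ln L\<^sub>3)\<close> with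
  \<open>L\<^sub>3 = ln ln ln n\<close> by the bound on \<open>\<lambda>\<^sub>1\<close>, which makes \<open>k\<^sup>2\<^sup>k\<close> only a small power of \<open>ln ln n\<close>.\<close>

lemma jump_size_bounds:
  fixes l1 :: nat and L2 L3 B K1 :: real
  assumes L: "1 \<le> L2" "1 \<le> L3" "1 \<le> ln L3"
    and B: "8 * K1 \<le> B" "0 < K1" "1 \<le> B"
    and l1: "real l1 \<le> K1 * (L2 * L3 / ln L3)" and large: "B * L2 < real l1"
    and exp_L3: "exp (2 + L3 / 4) \<le> L2" and L3_n: "L3 ^ 2 \<le> real n"
  defines "k \<equiv> nat \<lfloor>real l1 / (B * L2)\<rfloor>"
  shows "1 \<le> k \<and> exp 2 * real k ^ (2 * k) \<le> real l1 \<and> k * k \<le> n \<and> real l1 / real k \<le> 2 * B * L2"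
proof -
  define x where "x = real l1 / (B * L2)"
  have BL: "0 < B * L2" using B L by simp
  have "1 < x" using large BL by (simp add: x_def field_simps)
  then have floor_x: "1 \<le> \<lfloor>x\<rfloor>" by simp
  then have rk: "real k = of_int \<lfloor>x\<rfloor>" by (simp add: k_def x_def)
  then have k1: "1 \<le> k" using floor_x by linarith
  have "(1::real) \<le> of_int \<lfloor>x\<rfloor>" using floor_x by linarith
  then have x_le: "x \<le> 2 * real k" using rk real_of_int_floor_add_one_gt[of x] by linarith
  have "real k \<le> x" using rk by simp
  also have "x \<le> K1 * (L2 * L3 / ln L3) / (B * L2)"
    unfolding x_def by (rule divide_right_mono[OF l1]) (use BL in simp)
  also have "\<dots> = (K1 / B) * (L3 / ln L3)" using L B by (simp add: field_simps)
  also have "\<dots> \<le> (1 / 8) * (L3 / ln L3)"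
    using B L by (intro mult_right_mono) (auto simp: field_simps)
  finally have k_le: "real k \<le> L3 / (8 * ln L3)" by (simp add: field_simps)
  have "exp 2 * real k ^ (2 * k) \<le> exp (2 + L3 / 4)" by (rule exp_two_mult_power_le[OF k1 k_le L(2,3)])
  also have "\<dots> \<le> B * L2" using exp_L3 B L by (smt (verit) mult_le_cancel_right1)
  finally have "exp 2 * real k ^ (2 * k) \<le> real l1" using large by simp
  moreover have "k * k \<le> n"
  proof -
    have "0 < ln L3" using L by linarith
    then have "L3 / (8 * ln L3) \<le> L3 / 1" using L by (intro divide_left_mono) auto
    then have "real k * real k \<le> L3 * L3" using k_le k1 by (intro mult_mono) auto
    then have "real (k * k) \<le> real n" using L3_n by (simp add: power2_eq_square)
    then show ?thesis by (simp only: of_nat_le_iff)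
  qed
  moreover have "real l1 / real k \<le> 2 * B * L2"
  proof -
    have "real l1 = x * (B * L2)" using B L unfolding x_def by (simp add: field_simps)
    also have "\<dots> \<le> 2 * real k * (B * L2)" using x_le BL by (intro mult_right_mono) auto
    moreover have "0 < real k" using k1 by simp
    ultimately show ?thesis by (simp add: field_simps)
  qed
  ultimately show ?thesis using k1 by simp
qed

lemma jump_choice:
  fixes n l1 :: nat and K1 :: real
  assumes L: "1 \<le> ln (ln (real n))" "1 \<le> ln (ln (ln (real n)))" "1 \<le> ln (ln (ln (ln (real n))))"
    and K1: "0 < K1"
    and l1: "real l1 \<le> K1 * (ln (ln (real n)) * ln (ln (ln (real n))) / ln (ln (ln (ln (real n)))))"
    and exp_L3: "exp (2 + ln (ln (ln (real n))) / 4) \<le> ln (ln (real n))"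
    and L3_n: "(ln (ln (ln (real n))))\<^sup>2 \<le> real n"
  obtains jumps k where "jumps \<longrightarrow> 1 \<le> k \<and> exp 2 * real k ^ (2 * k) \<le> real l1 \<and> k * k \<le> n"
    and "(if jumps then 3 * real n * real l1 / real k else real n * real l1)
           \<le> 6 * (8 * max K1 1) * (real n * ln (ln (real n)))"
proof -
  define B where "B = 8 * max K1 1"
  define L2 where "L2 = ln (ln (real n))"
  define jumps where "jumps = (B * L2 < real l1)"
  define k where "k = nat \<lfloor>real l1 / (B * L2)\<rfloor>"
  have n: "0 \<le> real n" by simp
  have jump_bounds: "1 \<le> k \<and> exp 2 * real k ^ (2 * k) \<le> real l1 \<and> k * k \<le> n \<and> real l1 / real k \<le> 2 * B * L2"
    if jumps
    unfolding k_def
    by (rule jump_size_bounds) (use that L K1 l1 exp_L3 L3_n in \<open>auto simp: jumps_def B_def L2_def\<close>)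
  have "(if jumps then 3 * real n * real l1 / real k else real n * real l1) \<le> 6 * B * (real n * L2)"
  proof (cases jumps)
    case True
    then have "3 * real n * (real l1 / real k) \<le> 3 * real n * (2 * B * L2)"
      using jump_bounds by (intro mult_left_mono) auto
    then show ?thesis using True by (simp add: algebra_simps)
  next
    case False
    then have "real n * real l1 \<le> real n * (B * L2)" by (intro mult_left_mono) (auto simp: jumps_def)
    also have "\<dots> \<le> 6 * B * (real n * L2)" using L by (simp add: B_def L2_def algebra_simps)
    finally show ?thesis using False by simp
  qed
  then show ?thesis using that[of jumps k] jump_bounds by (simp add: B_def L2_def)
qed

lemma ga_cost_le:
  fixes n D l2 :: nat and c5 K6 :: real
  assumes L: "1 \<le> ln (real n)" "1 \<le> ln (ln (real n))" and D: "1 \<le> D" "D \<le> n"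
    and c5: "0 < c5" "c5 * (ln (real n) / ln (ln (real n))) \<le> real l2"
    and K6: "real l2 \<le> K6 * (real n / real D * ln (ln (real n)))"
  shows "real D * real l2 + 2 * real n / real l2 * (1 + ln (real D))
    \<le> (K6 + 4 / c5) * (real n * ln (ln (real n)))"
proof -
  let ?L1 = "ln (real n)" and ?L2 = "ln (ln (real n))"
  have "0 < ?L1" "0 < ?L2" using L by linarith+
  then have "0 < ?L1 / ?L2" by simp
  then have c5_L: "0 < c5 * (?L1 / ?L2)" by (rule mult_pos_pos[OF c5(1)])
  then have l2_pos: "0 < real l2" using c5(2) by linarith
  have "real D * real l2 \<le> real D * (K6 * (real n / real D * ?L2))"
    using K6 D by (intro mult_left_mono) auto
  also have "\<dots> = K6 * (real n * ?L2)" using D by (simp add: field_simps)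
  finally have first: "real D * real l2 \<le> K6 * (real n * ?L2)" .
  have "1 / real l2 \<le> 1 / (c5 * (?L1 / ?L2))"
    by (rule divide_left_mono[OF c5(2) _ mult_pos_pos[OF l2_pos c5_L]]) simp
  then have inv_l2: "1 / real l2 \<le> ?L2 / (c5 * ?L1)" using L c5 by (simp add: field_simps)
  have "ln (real D) \<le> ?L1" using D by simp
  then have "1 + ln (real D) \<le> 2 * ?L1" using L by simp
  then have "2 * real n * (1 / real l2) * (1 + ln (real D)) \<le> 2 * real n * (?L2 / (c5 * ?L1)) * (2 * ?L1)"
    using inv_l2 D l2_pos L c5(1) by (intro mult_mono) auto
  also have "\<dots> = 4 / c5 * (real n * ?L2)" using L c5 by (simp add: field_simps)
  finally show ?thesis using first by (simp add: algebra_simps)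
qed

lemma ea_cost_le:
  fixes n l1 D :: nat and K1 K2 c3 :: real
  assumes n: "2 \<le> n"
    and L: "1 \<le> ln (real n)" "1 \<le> ln (ln (real n))" "1 \<le> ln (ln (ln (real n)))" "1 \<le> ln (ln (ln (ln (real n))))"
    and K: "0 < K1" "0 < K2" and D: "1 \<le> D"
    and l1: "real l1 \<le> K1 * (ln (ln (real n)) * ln (ln (ln (real n))) / ln (ln (ln (ln (real n)))))"
    and D_lower: "real n / ln (real n) powr c3 \<le> real D"
    and D_upper: "real D \<le> K2 * (real n * (ln (ln (real n)))\<^sup>2 / ln (real n))"
    and small: "ln (ln (real n)) * ln (ln (ln (real n))) / ln (ln (ln (ln (real n)))) * ln (ln (real n))
                  / ln (real n) \<le> 1 / (K1 * K2)"
  shows "real l1 * real D + exp 2 * real n + exp 2 * real n * (ln (real n) - ln (real D))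
    \<le> (1 + exp 2 + exp 2 * c3) * (real n * ln (ln (real n)))"
proof -
  define N L1 L2 L3 L4 where "N = real n" and "L1 = ln N" and "L2 = ln L1" and "L3 = ln L2" and "L4 = ln L3"
  have LL: "1 \<le> L1" "1 \<le> L2" "1 \<le> L3" "1 \<le> L4" using L by (simp_all add: L1_def L2_def L3_def L4_def N_def)
  have "real l1 * real D \<le> (K1 * (L2 * L3 / L4)) * (K2 * (N * L2\<^sup>2 / L1))"
    using l1 D_upper D by (intro mult_mono) (auto simp: N_def L1_def L2_def L3_def L4_def)
  also have "\<dots> = (K1 * K2) * (N * L2) * (L2 * L3 / L4 * L2 / L1)" by (simp add: power2_eq_square field_simps)
  also have "\<dots> \<le> (K1 * K2) * (N * L2) * (1 / (K1 * K2))"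
    using small K LL by (intro mult_left_mono) (auto simp: N_def L1_def L2_def L3_def L4_def)
  finally have first: "real l1 * real D \<le> N * L2" using K by simp
  have "0 < N / L1 powr c3" using n LL by (simp add: N_def)
  then have "ln (N / L1 powr c3) \<le> ln (real D)"
    using D_lower by (simp add: N_def L1_def)
  moreover have "ln (N / L1 powr c3) = L1 - c3 * L2" using n LL by (simp add: ln_div L1_def L2_def N_def)
  ultimately have "exp 2 * N * (ln (real n) - ln (real D)) \<le> exp 2 * N * (c3 * L2)"
    using n by (intro mult_left_mono) (auto simp: N_def L1_def)
  moreover have "exp 2 * N \<le> exp 2 * (N * L2)" using LL n by (simp add: N_def)
  ultimately show ?thesis using first by (simp add: N_def L1_def L2_def algebra_simps)
qed

lemma expected_evals_le_n_lnln:
  fixes n l1 D l2 :: nat and K1 K2 c3 c5 K6 :: real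
  assumes n: "2 \<le> n"
    and L: "1 \<le> ln (real n)" "1 \<le> ln (ln (real n))" "1 \<le> ln (ln (ln (real n)))" "1 \<le> ln (ln (ln (ln (real n))))"
    and K: "0 < K1" "0 < K2" "0 < c5"
    and l1: "1 \<le> l1" "real l1 \<le> K1 * (ln (ln (real n)) * ln (ln (ln (real n))) / ln (ln (ln (ln (real n)))))"
    and D: "real n / ln (real n) powr c3 \<le> real D" "real D \<le> K2 * (real n * (ln (ln (real n)))\<^sup>2 / ln (real n))"
    and l2: "c5 * (ln (real n) / ln (ln (real n))) \<le> real l2" "real l2 \<le> K6 * (real n / real D * ln (ln (real n)))"
      "l2 \<le> n"
    and D_small: "K2 * ((ln (ln (real n)))\<^sup>2 / ln (real n)) \<le> 1"
    and l1_D_small: "ln (ln (real n)) * ln (ln (ln (real n))) / ln (ln (ln (ln (real n)))) * ln (ln (real n))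
        / ln (real n) \<le> 1 / (K1 * K2)"
    and exp_L3: "exp (2 + ln (ln (ln (real n))) / 4) \<le> ln (ln (real n))"
    and L3_n: "(ln (ln (ln (real n))))\<^sup>2 \<le> real n"
    and l2_large: "8 \<le> c5 * (ln (real n) / ln (ln (real n)))"
    and D_pos: "1 \<le> real n / ln (real n) powr c3"
  shows "expected_evals n l1 D l2 \<le> ennreal ((2 + 4 / crossover_const * (K6 + 4 / c5) + exp 2 + exp 2 * c3
    + 48 * max K1 1) * real n * ln (ln (real n)))"
proof -
  let ?NL2 = "real n * ln (ln (real n))"
  have D1: "1 \<le> D" using D(1) D_pos by linarith
  have Dn: "D \<le> n"
  proof -
    have "real D \<le> real n * (K2 * ((ln (ln (real n)))\<^sup>2 / ln (real n)))" using D(2) by (simp add: field_simps)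
    also have "\<dots> \<le> real n * 1" using D_small by (intro mult_left_mono) auto
    finally show ?thesis by simp
  qed
  have l2_8: "8 \<le> l2" using l2_large l2(1) by linarith
  obtain jumps k where jumps: "jumps \<longrightarrow> 1 \<le> k \<and> exp 2 * real k ^ (2 * k) \<le> real l1 \<and> k * k \<le> n"
    and jump_cost: "(if jumps then 3 * real n * real l1 / real k else real n * real l1)
      \<le> 6 * (8 * max K1 1) * ?NL2"
    using jump_choice[OF L(2-4) K(1) l1(2) exp_L3 L3_n] by blast
  have "4 / crossover_const * (real D * real l2 + 2 * real n / real l2 * (1 + ln (real D)))
      \<le> 4 / crossover_const * ((K6 + 4 / c5) * ?NL2)"
    using ga_cost_le[OF L(1,2) D1 Dn K(3) l2(1,2)] crossover_const_pos by (intro mult_left_mono) auto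
  moreover have "real l1 * real D + exp 2 * real n + exp 2 * real n * (ln (real n) - ln (real D))
      \<le> (1 + exp 2 + exp 2 * c3) * ?NL2"
    by (rule ea_cost_le[OF n L K(1,2) D1 l1(2) D l1_D_small])
  moreover have "1 * 1 \<le> ?NL2" using n L by (intro mult_mono) auto
  moreover have "(2 + 4 / crossover_const * (K6 + 4 / c5) + exp 2 + exp 2 * c3 + 48 * max K1 1)
      * real n * ln (ln (real n))
    = 1 * ?NL2 + 4 / crossover_const * ((K6 + 4 / c5) * ?NL2) + (1 + exp 2 + exp 2 * c3) * ?NL2
      + 6 * (8 * max K1 1) * ?NL2"
    by (simp add: algebra_simps)
  ultimately have "1 + 4 / crossover_const * (real D * real l2 + 2 * real n / real l2 * (1 + ln (real D)))
      + (real l1 * real D + exp 2 * real n + exp 2 * real n * (ln (real n) - ln (real D))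
         + (if jumps then 3 * real n * real l1 / real k else real n * real l1))
    \<le> (2 + 4 / crossover_const * (K6 + 4 / c5) + exp 2 + exp 2 * c3 + 48 * max K1 1) * real n * ln (ln (real n))"
    using jump_cost by linarith
  with expected_evals_le_explicit[OF n l1(1) l2_8 l2(3) D1 Dn jumps] show ?thesis
    by (rule order_trans[OF _ ennreal_leI])
qed

lemma eventually_large_n:
  fixes K1 K2 c3 c5 :: real
  assumes "0 < K1" "0 < K2" "0 < c3" "0 < c5"
  shows "\<forall>\<^sub>F n in at_top. 2 \<le> n \<and> 1 \<le> ln (real n) \<and> 1 \<le> ln (ln (real n))
    \<and> 1 \<le> ln (ln (ln (real n))) \<and> 1 \<le> ln (ln (ln (ln (real n))))
    \<and> K2 * ((ln (ln (real n)))\<^sup>2 / ln (real n)) \<le> 1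
    \<and> ln (ln (real n)) * ln (ln (ln (real n))) / ln (ln (ln (ln (real n)))) * ln (ln (real n)) / ln (real n)
        \<le> 1 / (K1 * K2)
    \<and> exp (2 + ln (ln (ln (real n))) / 4) \<le> ln (ln (real n))
    \<and> (ln (ln (ln (real n))))\<^sup>2 \<le> real n
    \<and> 8 \<le> c5 * (ln (real n) / ln (ln (real n)))
    \<and> 1 \<le> real n / ln (real n) powr c3"
proof -
  have "((\<lambda>n::nat. (ln (ln (real n)))\<^sup>2 / ln (real n)) \<longlongrightarrow> 0) at_top" by real_asymp
  then have "\<forall>\<^sub>F n in at_top. (ln (ln (real n)))\<^sup>2 / ln (real n) < 1 / K2"
    using assms by (intro order_tendstoD(2)) auto
  then have D_small: "\<forall>\<^sub>F n in at_top. K2 * ((ln (ln (real n)))\<^sup>2 / ln (real n)) \<le> 1"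
    by eventually_elim (use assms in \<open>simp add: field_simps\<close>)
  have "((\<lambda>n::nat. ln (ln (real n)) * ln (ln (ln (real n))) / ln (ln (ln (ln (real n)))) * ln (ln (real n))
      / ln (real n)) \<longlongrightarrow> 0) at_top" by real_asymp
  then have "\<forall>\<^sub>F n in at_top. ln (ln (real n)) * ln (ln (ln (real n))) / ln (ln (ln (ln (real n))))
      * ln (ln (real n)) / ln (real n) < 1 / (K1 * K2)"
    using assms by (intro order_tendstoD(2)) auto
  then have l1_D_small: "\<forall>\<^sub>F n in at_top. ln (ln (real n)) * ln (ln (ln (real n))) / ln (ln (ln (ln (real n))))
      * ln (ln (real n)) / ln (real n) \<le> 1 / (K1 * K2)"
    by eventually_elim simp
  have "\<forall>\<^sub>F n in at_top. 2 \<le> n \<and> 1 \<le> ln (real n) \<and> 1 \<le> ln (ln (real n))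
      \<and> 1 \<le> ln (ln (ln (real n))) \<and> 1 \<le> ln (ln (ln (ln (real n))))"
    by (intro eventually_conj; real_asymp)
  moreover have "\<forall>\<^sub>F n::nat in at_top. exp (2 + ln (ln (ln (real n))) / 4) \<le> ln (ln (real n))"
    "\<forall>\<^sub>F n::nat in at_top. (ln (ln (ln (real n))))\<^sup>2 \<le> real n"
    "\<forall>\<^sub>F n::nat in at_top. 8 \<le> c5 * (ln (real n) / ln (ln (real n)))"
    "\<forall>\<^sub>F n::nat in at_top. 1 \<le> real n / ln (real n) powr c3"
    using assms by real_asymp+
  ultimately show ?thesis using D_small l1_D_small by eventually_elim blast
qed

lemma bigo_eventually_leE:
  fixes f g :: "'a \<Rightarrow> real"
  assumes "f \<in> O[F](g)" "\<forall>\<^sub>F x in F. 0 \<le> g x"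
  obtains K where "0 < K" "\<forall>\<^sub>F x in F. f x \<le> K * g x"
proof -
  obtain K where K: "0 < K" "\<forall>\<^sub>F x in F. norm (f x) \<le> K * norm (g x)"
    using assms(1) by (elim landau_o.bigE) auto
  from K(2) assms(2) have "\<forall>\<^sub>F x in F. f x \<le> K * g x"
    by eventually_elim (auto simp: abs_le_iff)
  with K(1) show ?thesis by (rule that)
qed

lemma bigomega_eventually_geE:
  fixes f g :: "'a \<Rightarrow> real"
  assumes "f \<in> \<Omega>[F](g)" "\<forall>\<^sub>F x in F. 0 \<le> g x" "\<And>x. 0 \<le> f x"
  obtains c where "0 < c" "\<forall>\<^sub>F x in F. c * g x \<le> f x"
proof -
  obtain c where c: "0 < c" "\<forall>\<^sub>F x in F. c * norm (g x) \<le> norm (f x)"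
    using assms(1) by (elim landau_omega.bigE) auto
  from c(2) assms(2) have "\<forall>\<^sub>F x in F. c * g x \<le> f x"
    by eventually_elim (use assms(3) in simp)
  with c(1) show ?thesis by (rule that)
qed

theorem corollary4p3:
  fixes lam1 D lam2 :: "nat \<Rightarrow> nat"
  assumes "\<forall>\<^sub>F n in at_top. 1 \<le> lam1 n"
    and "(\<lambda>n. real (lam1 n)) \<in>
           O(\<lambda>n. ln (ln (real n)) * ln (ln (ln (real n))) / ln (ln (ln (ln (real n)))))"
    and "\<exists>c>0. \<forall>\<^sub>F n in at_top. real n / ln (real n) powr c \<le> real (D n)"
    and "(\<lambda>n. real (D n)) \<in> O(\<lambda>n. real n * (ln (ln (real n)))\<^sup>2 / ln (real n))"
    and "(\<lambda>n. real (lam2 n)) \<in> \<Omega>(\<lambda>n. ln (real n) / ln (ln (real n)))"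
    and "(\<lambda>n. real (lam2 n)) \<in> O(\<lambda>n. real n / real (D n) * ln (ln (real n)))"
    and "\<forall>\<^sub>F n in at_top. 1 \<le> lam2 n \<and> lam2 n \<le> n"
  shows "\<exists>C. \<forall>\<^sub>F n in at_top.
           expected_evals n (lam1 n) (D n) (lam2 n) \<le> ennreal (C * real n * ln (ln (real n)))"
proof -
  obtain K1 where K1: "0 < K1" "\<forall>\<^sub>F n in at_top.
      real (lam1 n) \<le> K1 * (ln (ln (real n)) * ln (ln (ln (real n))) / ln (ln (ln (ln (real n)))))"
    using assms(2) by (rule bigo_eventually_leE) real_asymp
  obtain c3 where c3: "0 < c3" "\<forall>\<^sub>F n in at_top. real n / ln (real n) powr c3 \<le> real (D n)"
    using assms(3) by blast
  obtain K2 where K2: "0 < K2" "\<forall>\<^sub>F n in at_top. real (D n) \<le> K2 * (real n * (ln (ln (real n)))\<^sup>2 / ln (real n))"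
    using assms(4) by (rule bigo_eventually_leE) real_asymp
  obtain c5 where c5: "0 < c5" "\<forall>\<^sub>F n in at_top. c5 * (ln (real n) / ln (ln (real n))) \<le> real (lam2 n)"
    using assms(5) by (rule bigomega_eventually_geE) (real_asymp, simp)
  have "\<forall>\<^sub>F n in at_top. 0 \<le> ln (ln (real n))" by real_asymp
  then have "\<forall>\<^sub>F n in at_top. 0 \<le> real n / real (D n) * ln (ln (real n))"
    by eventually_elim simp
  with assms(6) obtain K6 where K6: "\<forall>\<^sub>F n in at_top. real (lam2 n) \<le> K6 * (real n / real (D n) * ln (ln (real n)))"
    by (rule bigo_eventually_leE)
  have "\<forall>\<^sub>F n in at_top. expected_evals n (lam1 n) (D n) (lam2 n) \<le> ennreal
      ((2 + 4 / crossover_const * (K6 + 4 / c5) + exp 2 + exp 2 * c3 + 48 * max K1 1) * real n * ln (ln (real n)))"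
    using eventually_large_n[OF K1(1) K2(1) c3(1) c5(1)] assms(1,7) K1(2) c3(2) K2(2) c5(2) K6
  proof eventually_elim
    case (elim n)
    show ?case by (rule expected_evals_le_n_lnln) (use K1(1) K2(1) c5(1) elim in blast)+
  qed
  then show ?thesis by blast
qed

end
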